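(* Fix reals $r'>r>0$ and Young diagrams $\mu\subseteq\lambda$. Let integers $N'>N$ tend to infinity in such a way that $N'/N\to r'/r$. Regard $\lambda$ as the signature $(\lambda_1,\dots,\lambda_{N'})\in\mathbb S_{N'}$ (padded with zeros) and $\mu$ as the signature $(\mu_1,\dots,\mu_N)\in\mathbb S_N$; this makes sense once $N\ge\ell(\lambda)$. Then $$\lim\Lambda^{N'}_N(\lambda,\mu)={}^{\mathbb{YB}}\Lambda^{r'}_r(\lambda,\mu).$$
   Context: Signatures and links: - $\mathbb S_N$ is the set of integer $N$-tuples $\nu_1\ge\dots\ge\nu_N$. - $\mathrm{Dim}_N\nu=\prod_{1\le i<j\le N}\frac{\nu_i-\nu_j-i+j}{j-i}$. - For $\kappa\in\mathbb S_K$ and $\nu\in\mathbb S_N$ with $K<N$, $\mathrm{Dim}_{K,N}(\kappa,\nu)$ is the number of chains $\kappa=\lambda^{(K)}\prec\dots\prec\lambda^{(N)}=\nu$, $\lambda^{(j)}\in\mathbb S_j$. Here $\lambda\prec\nu$ means $\nu_i\ge\lambda_i\ge\nu_{i+1}$ for all $i$. - The Gelfand–Tsetlin link is $\Lambda^N_K(\nu,\kappa)=\mathrm{Dim}_K\kappa\,\mathrm{Dim}_{K,N}(\kappa,\nu)/\mathrm{Dim}_N\nu$. Young diagrams: $\ell(\lambda)$ is the number of nonzero rows of $\lambda$, and $|\lambda|$ is its number of boxes. $\dim\lambda$ (resp. $\dim\lambda/\mu$) is the number of standard Young tableaux of shape $\lambda$ (resp. skew shape $\lambda/\mu$). The Young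 bouquet link: for $r'>r>0$ and Young diagrams $\lambda,\mu$, $${}^{\mathbb{YB}}\Lambda^{r'}_r(\lambda,\mu)=\binom{|\lambda|}{|\mu|}\Big(\frac{r}{r'}\Big)^{|\mu|}\Big(1-\frac{r}{r'}\Big)^{|\lambda|-|\mu|}\frac{\dim\mu\,\dim\lambda/\mu}{\dim\lambda}$$ if $\mu\subseteq\lambda$, and $0$ otherwise. *)

theory Defs
  imports Complex_Main
begin

(* Signatures in S_N: non-increasing integer lists of length N (0-based indices). *)
definition sigs :: "nat \<Rightarrow> int list set" where
  "sigs N = {nu. length nu = N \<and> sorted_wrt (\<ge>) nu}"

definition DimN :: "nat \<Rightarrow> int list \<Rightarrow> real" where
  "DimN N nu = (\<Prod>(i,j)\<in>{(i,j). i < j \<and> j < N}.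
      (real_of_int (nu!i - nu!j) - real i + real j) / (real j - real i))"

definition interlace :: "int list \<Rightarrow> int list \<Rightarrow> bool" where
  "interlace la nu \<longleftrightarrow> length nu = Suc (length la) \<and>
     (\<forall>i < length la. nu!i \<ge> la!i \<and> la!i \<ge> nu!(Suc i))"

definition DimKN :: "nat \<Rightarrow> nat \<Rightarrow> int list \<Rightarrow> int list \<Rightarrow> nat" where
  "DimKN K N ka nu = card {c :: int list list.
      length c = N - K + 1 \<and> c!0 = ka \<and> c!(N - K) = nu \<and>
      (\<forall>j \<le> N - K. c!j \<in> sigs (K + j)) \<and>
      (\<forall>j < N - K. interlace (c!j) (c!(Suc j)))}"

definition GT_link :: "nat \<Rightarrow> nat \<Rightarrow> int list \<Rightarrow> int list \<Rightarrow> real" where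
  "GT_link N K nu ka = DimN K ka * real (DimKN K N ka nu) / DimN N nu"

(* Young diagrams: non-increasing lists of positive naturals (row lengths) *)
definition young :: "nat list \<Rightarrow> bool" where
  "young la \<longleftrightarrow> sorted_wrt (\<ge>) la \<and> 0 \<notin> set la"

definition size_yd :: "nat list \<Rightarrow> nat" where
  "size_yd la = sum_list la"

definition yd_subset :: "nat list \<Rightarrow> nat list \<Rightarrow> bool" where
  "yd_subset mu la \<longleftrightarrow> length mu \<le> length la \<and> (\<forall>i < length mu. mu!i \<le> la!i)"

definition cells :: "nat list \<Rightarrow> (nat \<times> nat) set" where
  "cells la = {(i,j). i < length la \<and> j < la!i}"

definition SYT :: "nat list \<Rightarrow> nat list \<Rightarrow> ((nat \<times> nat) \<Rightarrow> nat) set" where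
  "SYT la mu = (let C = cells la - cells mu in
     {T. bij_betw T C {1..card C} \<and> (\<forall>x. x \<notin> C \<longrightarrow> T x = 0) \<and>
         (\<forall>i j. (i,j) \<in> C \<and> (i, Suc j) \<in> C \<longrightarrow> T (i,j) < T (i, Suc j)) \<and>
         (\<forall>i j. (i,j) \<in> C \<and> (Suc i, j) \<in> C \<longrightarrow> T (i,j) < T (Suc i, j))})"

definition dim_skew :: "nat list \<Rightarrow> nat list \<Rightarrow> nat" where
  "dim_skew la mu = card (SYT la mu)"

definition dim_yd :: "nat list \<Rightarrow> nat" where
  "dim_yd la = dim_skew la []"

definition YB_link :: "real \<Rightarrow> real \<Rightarrow> nat list \<Rightarrow> nat list \<Rightarrow> real" where
  "YB_link r' r la mu = (if yd_subset mu la then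
      real (size_yd la choose size_yd mu) * (r / r') ^ size_yd mu *
      (1 - r / r') ^ (size_yd la - size_yd mu) *
      real (dim_yd mu) * real (dim_skew la mu) / real (dim_yd la)
    else 0)"

definition pad :: "nat \<Rightarrow> nat list \<Rightarrow> int list" where
  "pad N la = map int la @ replicate (N - length la) 0"

end

theory Submission
  imports Defs "Jordan_Normal_Form.Determinant" "HOL-Computational_Algebra.Polynomial"
begin

(* The link is Dim_N mu * Dim_(N,N')(mu, la) / Dim_N' la, and all three factors are
   counts of interlacing chains:
   (1) Writing Dim_N as a determinant of binomial coefficients (a Vandermonde determinant
       in the shifted coordinates i - nu_i) gives the branching rule
       Dim_(N+1) nu = sum of Dim_N la over la interlacing nu; hence Dim_N nu = Dim_(0,N)([], nu).
   (2) Chains from mu padded to length K to la padded to length K+m are in bijection with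
       semistandard fillings of la/mu by 1..m. Fillings with distinct entries correspond
       to pairs (standard tableau of la/mu, m-subset of size n = |la| - |mu|), the others
       number at most n^2 m^(n-1). So such a chain count is dim(la/mu) m^n / n! + O(m^(n-1)).
   (3) Applied with m = N, N' - N, N' and combined with N/N' -> r/r', (N'-N)/N' -> 1 - r/r',
       this yields the binomial formula of the Young bouquet link. *)

lemma down_closed_eq_lessThan:
  fixes S :: "nat set"
  assumes "finite S" "\<And>j j'. j \<in> S \<Longrightarrow> j' \<le> j \<Longrightarrow> j' \<in> S"
  shows "S = {..<card S}"
proof (cases "S = {}")
  case False
  define M where "M = Max S"
  have MS: "M \<in> S" using assms(1) False by (simp add: M_def)
  have "S = {..M}"
  proof
    show "S \<subseteq> {..M}" using assms(1) by (auto simp: M_def)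
    show "{..M} \<subseteq> S" using MS assms(2) by auto
  qed
  then show ?thesis by (simp add: lessThan_Suc_atMost)
qed simp

definition supported_funs :: "'a set \<Rightarrow> nat set \<Rightarrow> ('a \<Rightarrow> nat) set" where
  "supported_funs A B = {F. (\<forall>x. x \<notin> A \<longrightarrow> F x = 0) \<and> (\<forall>x\<in>A. F x \<in> B)}"

(* They are determined by their restriction to A, an element of A \<rightarrow> B. *)
lemma finite_supported_funs:
  assumes "finite A" "finite B"
  shows "finite (supported_funs A B)"
proof (rule finite_subset)
  show "supported_funs A B \<subseteq> (\<lambda>g x. if x \<in> A then g x else 0) ` PiE A (\<lambda>_. B)"
  proof
    fix F assume F: "F \<in> supported_funs A B"
    have "F = (\<lambda>x. if x \<in> A then restrict F A x else 0)"
      using F by (auto simp: supported_funs_def fun_eq_iff)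
    moreover have "restrict F A \<in> PiE A (\<lambda>_. B)"
      using F by (auto simp: supported_funs_def)
    ultimately show "F \<in> (\<lambda>g x. if x \<in> A then g x else 0) ` PiE A (\<lambda>_. B)"
      by blast
  qed
  show "finite ((\<lambda>g x. if x \<in> A then g x else 0) ` PiE A (\<lambda>_. B))"
    using assms by (intro finite_imageI finite_PiE) auto
qed

(* Supported functions agreeing at two given points a, b of A: all values but the one at b are
   free, so there are at most |B|^(|A|-1) of them. *)
lemma card_funs_coinciding:
  assumes A: "finite A" and B: "finite B" and ab: "a \<in> A" "b \<in> A" "a \<noteq> b"
  shows "card {F \<in> supported_funs A B. F a = F b} \<le> card B ^ (card A - 1)"
    (is "card ?E \<le> _")
proof -
  have fin: "finite (PiE (A - {b}) (\<lambda>_. B))"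
    using A B by (intro finite_PiE) auto
  have "inj_on (\<lambda>F. restrict F (A - {b})) ?E"
  proof (rule inj_onI)
    fix F F' assume F: "F \<in> ?E" and F': "F' \<in> ?E" and e: "restrict F (A - {b}) = restrict F' (A - {b})"
    have "F x = F' x" for x
    proof -
      consider "x \<in> A - {b}" | "x = b" | "x \<notin> A"
        by blast
      then show ?thesis
      proof cases
        case 1 then show ?thesis using fun_cong[OF e, of x] by simp
      next
        case 2 then show ?thesis using fun_cong[OF e, of a] ab F F' by simp
      next
        case 3 then show ?thesis using F F' by (simp add: supported_funs_def)
      qed
    qed
    then show "F = F'" ..
  qed
  moreover have "(\<lambda>F. restrict F (A - {b})) ` ?E \<subseteq> PiE (A - {b}) (\<lambda>_. B)"
  proof (rule image_subsetI)
    fix F assume "F \<in> ?E"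
    then show "restrict F (A - {b}) \<in> PiE (A - {b}) (\<lambda>_. B)"
      by (simp add: supported_funs_def restrict_PiE_iff)
  qed
  ultimately have "card ?E \<le> card (PiE (A - {b}) (\<lambda>_. B))"
    by (rule card_inj_on_le[OF _ _ fin])
  also have "\<dots> = card B ^ (card A - 1)"
    using A ab by (simp add: card_PiE)
  finally show ?thesis .
qed

lemma card_non_injective_funs:
  assumes A: "finite A" and B: "finite B"
  shows "card {F \<in> supported_funs A B. \<not> inj_on F A} \<le> card A ^ 2 * card B ^ (card A - 1)"
proof -
  define P where "P = {(a,b). a \<in> A \<and> b \<in> A \<and> a \<noteq> b}"
  define E where "E p = {F \<in> supported_funs A B. F (fst p) = F (snd p)}" for p
  have fP: "finite P"
    by (rule finite_subset[of _ "A \<times> A"]) (auto simp: P_def A)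
  have "{F \<in> supported_funs A B. \<not> inj_on F A} \<subseteq> (\<Union>p\<in>P. E p)"
    by (force simp: inj_on_def P_def E_def)
  moreover have "finite (\<Union>p\<in>P. E p)"
    using fP finite_supported_funs[OF A B] by (auto simp: E_def)
  ultimately have "card {F \<in> supported_funs A B. \<not> inj_on F A} \<le> card (\<Union>p\<in>P. E p)"
    by (rule card_mono[rotated])
  also have "\<dots> \<le> (\<Sum>p\<in>P. card (E p))"
    by (rule card_UN_le[OF fP])
  also have "\<dots> \<le> (\<Sum>p\<in>P. card B ^ (card A - 1))"
  proof (rule sum_mono)
    fix p assume "p \<in> P"
    then show "card (E p) \<le> card B ^ (card A - 1)"
      unfolding E_def using card_funs_coinciding[OF A B, of "fst p" "snd p"] by (auto simp: P_def)
  qed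
  also have "\<dots> \<le> card A ^ 2 * card B ^ (card A - 1)"
    using card_mono[of "A \<times> A" P] A by (auto simp: P_def card_cartesian_product power2_eq_square)
  finally show ?thesis .
qed

(* The k-th smallest element (counting from 1) of a finite set of naturals. *)
definition nth_elem :: "nat set \<Rightarrow> nat \<Rightarrow> nat" where
  "nth_elem S k = sorted_list_of_set S ! (k - 1)"

lemma nth_elem_props:
  assumes S: "finite S" "card S = n0"
  shows "\<And>k. k \<in> {1..n0} \<Longrightarrow> nth_elem S k \<in> S"
    and "\<And>k k'. k \<in> {1..n0} \<Longrightarrow> k' \<in> {1..n0} \<Longrightarrow> k < k' \<Longrightarrow> nth_elem S k < nth_elem S k'"
    and "nth_elem S ` {1..n0} = S"
    and "inj_on (nth_elem S) {1..n0}"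
proof -
  define L where "L = sorted_list_of_set S"
  have L: "set L = S" "length L = n0" "sorted_wrt (<) L"
    using S by (auto simp: L_def)
  have nth_L: "nth_elem S k = L ! (k - 1)" for k by (simp add: nth_elem_def L_def)
  show a: "nth_elem S k \<in> S" if "k \<in> {1..n0}" for k
  proof -
    have "k - 1 < length L" using that L(2) by auto
    then have "L ! (k - 1) \<in> set L" by (rule nth_mem)
    then show ?thesis using L(1) nth_L by simp
  qed
  show b: "nth_elem S k < nth_elem S k'" if "k \<in> {1..n0}" "k' \<in> {1..n0}" "k < k'" for k k'
  proof -
    have "k - 1 < k' - 1" "k' - 1 < length L" using that L(2) by auto
    then have "L ! (k - 1) < L ! (k' - 1)" by (rule sorted_wrt_nth_less[OF L(3)])
    then show ?thesis using nth_L by simp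
  qed
  show "nth_elem S ` {1..n0} = S"
  proof
    show "nth_elem S ` {1..n0} \<subseteq> S" using a by auto
    show "S \<subseteq> nth_elem S ` {1..n0}"
    proof
      fix v assume "v \<in> S"
      then have "v \<in> set L" using L(1) by simp
      then obtain i where i: "i < length L" "L!i = v" by (auto simp: in_set_conv_nth)
      then have "nth_elem S (Suc i) = v" using nth_L by simp
      moreover have "Suc i \<in> {1..n0}" using i L(2) by simp
      ultimately show "v \<in> nth_elem S ` {1..n0}" by force
    qed
  qed
  show "inj_on (nth_elem S) {1..n0}"
  proof (rule inj_onI)
    fix x y assume xy: "x \<in> {1..n0}" "y \<in> {1..n0}" "nth_elem S x = nth_elem S y"
    show "x = y"
    proof (rule ccontr)
      assume "x \<noteq> y"
      then have "x < y \<or> y < x" by auto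
      then show False using b[OF xy(1,2)] b[OF xy(2,1)] xy(3) by auto
    qed
  qed
qed

definition rank_in :: "nat set \<Rightarrow> nat \<Rightarrow> nat" where
  "rank_in S v = card {s\<in>S. s \<le> v}"

lemma rank_in_strict:
  assumes "finite S" "v \<in> S" "v' \<in> S" "v < v'"
  shows "rank_in S v < rank_in S v'"
proof -
  have "{s\<in>S. s \<le> v} \<subset> {s\<in>S. s \<le> v'}"
  proof (rule psubsetI)
    show "{s\<in>S. s \<le> v} \<subseteq> {s\<in>S. s \<le> v'}" using assms by auto
    have "v' \<in> {s\<in>S. s \<le> v'}" "v' \<notin> {s\<in>S. s \<le> v}" using assms by auto
    then show "{s\<in>S. s \<le> v} \<noteq> {s\<in>S. s \<le> v'}" by blast
  qed
  then show ?thesis unfolding rank_in_def by (rule psubset_card_mono[rotated]) (use assms in auto)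
qed

lemma rank_in_range:
  assumes "finite S" "v \<in> S"
  shows "1 \<le> rank_in S v" "rank_in S v \<le> card S"
proof -
  have "{s\<in>S. s \<le> v} \<noteq> {}" using assms by auto
  then show "1 \<le> rank_in S v" unfolding rank_in_def using assms
    by (metis (no_types, lifting) One_nat_def Suc_leI card_gt_0_iff finite_subset mem_Collect_eq subsetI)
  show "rank_in S v \<le> card S" unfolding rank_in_def by (rule card_mono) (use assms in auto)
qed

lemma rank_in_inj:
  assumes "finite S" "v \<in> S" "v' \<in> S" "rank_in S v = rank_in S v'"
  shows "v = v'"
  using rank_in_strict[OF assms(1-3)] rank_in_strict[OF assms(1) assms(3) assms(2)] assms(4)
  by (metis less_irrefl linorder_neqE_nat)

(* Determinants. The dimension Dim_N is a determinant of binomial coefficients (via Vandermonde). *)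

lemma det_diagonal_mat:
  "det (mat n n (\<lambda>(i,j). if i = j then (d i::'a::comm_ring_1) else 0)) = (\<Prod>i<n. d i)"
proof -
  have "det (mat n n (\<lambda>(i,j). if i = j then d i else 0)) =
        prod_list (diag_mat (mat n n (\<lambda>(i,j). if i = j then d i else 0)))"
    by (rule det_upper_triangular) (auto simp: upper_triangular_def)
  also have "\<dots> = prod_list (map d [0..<n])"
    by (auto simp: diag_mat_def intro!: arg_cong[where f=prod_list] map_cong)
  also have "\<dots> = (\<Prod>i<n. d i)"
    by (simp add: prod.distinct_set_conv_list[symmetric] atLeast0LessThan)
  finally show ?thesis .
qed

lemma det_single_entry_row:
  fixes A :: "'a::comm_ring_1 mat"
  assumes A: "A \<in> carrier_mat n n" and ij: "i < n" "j < n"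
    and zero: "\<And>k. k < n \<Longrightarrow> k \<noteq> j \<Longrightarrow> A $$ (i,k) = 0"
  shows "det A = A $$ (i,j) * cofactor A i j"
proof -
  have "det A = (\<Sum>k<n. A $$ (i,k) * cofactor A i k)"
    by (rule laplace_expansion_row[OF A ij(1)])
  also have "\<dots> = (\<Sum>k<n. if k = j then A $$ (i,k) * cofactor A i k else 0)"
    by (rule sum.cong) (auto simp: zero)
  finally show ?thesis
    using ij(2) by (simp add: sum.delta)
qed

lemma det_single_entry_column:
  fixes A :: "'a::comm_ring_1 mat"
  assumes A: "A \<in> carrier_mat n n" and ij: "i < n" "j < n"
    and zero: "\<And>k. k < n \<Longrightarrow> k \<noteq> i \<Longrightarrow> A $$ (k,j) = 0"
  shows "det A = A $$ (i,j) * cofactor A i j"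
proof -
  have "det A = (\<Sum>k<n. A $$ (k,j) * cofactor A k j)"
    by (rule laplace_expansion_column[OF A ij(2)])
  also have "\<dots> = (\<Sum>k<n. if k = i then A $$ (k,j) * cofactor A k j else 0)"
    by (rule sum.cong) (auto simp: zero)
  finally show ?thesis
    using ij(1) by (simp add: sum.delta)
qed

lemma sum_bidiagonal_column:
  fixes x a :: "'a::comm_ring_1"
  assumes "k < Suc n"
  shows "(\<Sum>t<Suc n. x ^ t * (if t = k then 1 else if k = Suc t then - a else 0)) =
     (if k = 0 then 1 else x ^ k - a * x ^ (k - 1))"
proof -
  have "(\<Sum>t<Suc n. x ^ t * (if t = k then 1 else if k = Suc t then - a else 0)) =
     (\<Sum>t<Suc n. (if t = k then x ^ t else 0)) + (\<Sum>t<Suc n. (if Suc t = k then - a * x ^ t else 0))"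
    by (subst sum.distrib[symmetric], rule sum.cong, auto)
  also have "\<dots> = x ^ k + (if k = 0 then 0 else - a * x ^ (k - 1))"
  proof -
    have "(\<Sum>t<Suc n. (if Suc t = k then - a * x ^ t else 0)) = (if k = 0 then 0 else - a * x ^ (k - 1))"
    proof (cases k)
      case 0 then show ?thesis by simp
    next
      case (Suc k')
      then have "(\<Sum>t<Suc n. (if Suc t = k then - a * x ^ t else 0)) = (\<Sum>t<Suc n. (if t = k' then - a * x ^ t else 0))"
        by (intro sum.cong) auto
      also have "\<dots> = - a * x ^ k'" using assms Suc by (simp add: sum.delta)
      finally show ?thesis using Suc by simp
    qed
    moreover have "(\<Sum>t<Suc n. (if t = k then x ^ t else 0)) = x ^ k" using assms by (simp add: sum.delta)
    ultimately show ?thesis by simp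
  qed
  finally show ?thesis by auto
qed

(* The Vandermonde determinant, by subtracting a multiple of each column from the next and
   expanding. *)
lemma det_vandermonde:
  "det (mat n n (\<lambda>(i,k). (x i :: 'a::comm_ring_1) ^ k)) = (\<Prod>j<n. \<Prod>i<j. x j - x i)"
proof (induction n)
  case 0
  show ?case by (simp add: det_dim_zero)
next
  case (Suc n)
  define M where "M = mat (Suc n) (Suc n) (\<lambda>(i,k). x i ^ k)"
  define U where "U = mat (Suc n) (Suc n) (\<lambda>(t,k). if t = k then 1 else if k = Suc t then - x n else (0::'a))"
  have MC: "M \<in> carrier_mat (Suc n) (Suc n)" and UC: "U \<in> carrier_mat (Suc n) (Suc n)"
    by (auto simp: M_def U_def)
  have detU: "det U = 1"
  proof -
    have "det U = prod_list (diag_mat U)"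
      by (rule det_upper_triangular[OF _ UC]) (auto simp: upper_triangular_def U_def)
    also have "\<dots> = 1" by (auto simp: diag_mat_def U_def prod.distinct_set_conv_list[symmetric] intro!: prod.neutral)
    finally show ?thesis .
  qed
  define A where "A = M * U"
  have AC: "A \<in> carrier_mat (Suc n) (Suc n)" using MC UC by (auto simp: A_def)
  have Aent: "A $$ (i,k) = (if k = 0 then 1 else x i ^ k - x n * x i ^ (k - 1))"
    if "i < Suc n" "k < Suc n" for i k
  proof -
    have "A $$ (i,k) = (\<Sum>t<Suc n. x i ^ t * (if t = k then 1 else if k = Suc t then - x n else 0))"
      using that by (simp add: A_def M_def U_def scalar_prod_def atLeast0LessThan)
    also have "\<dots> = (if k = 0 then 1 else x i ^ k - x n * x i ^ (k - 1))"
      by (rule sum_bidiagonal_column[OF that(2)])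
    finally show ?thesis .
  qed
  have "det M = det A" using det_mult[OF MC UC] detU by (simp add: A_def)
  also have "det A = A $$ (n,0) * cofactor A n 0"
    by (rule det_single_entry_row[OF AC]) (auto simp: Aent gr0_conv_Suc)
  also have "\<dots> = (-1)^n * det (mat_delete A n 0)"
    using Aent[of n 0] by (simp add: cofactor_def)
  also have "mat_delete A n 0 = mat n n (\<lambda>(i,j). if i = j then x i - x n else 0) * mat n n (\<lambda>(i,k). x i ^ k)"
  proof (rule eq_matI)
    fix i j assume ij: "i < dim_row (mat n n (\<lambda>(i,j). if i = j then x i - x n else 0) * mat n n (\<lambda>(i,k). x i ^ k))"
       "j < dim_col (mat n n (\<lambda>(i,j). if i = j then x i - x n else 0) * mat n n (\<lambda>(i,k). x i ^ k))"
    then have i: "i < n" and j: "j < n" by auto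
    have "mat_delete A n 0 $$ (i,j) = A $$ (i, Suc j)"
      using i j AC by (simp add: mat_delete_def)
    also have "\<dots> = (x i - x n) * x i ^ j" using Aent[of i "Suc j"] i j by (simp add: algebra_simps)
    also have "\<dots> = (\<Sum>t<n. (if i = t then x i - x n else 0) * x t ^ j)"
    proof -
      have "(\<Sum>t<n. (if i = t then x i - x n else 0) * x t ^ j) = (\<Sum>t<n. if i = t then (x i - x n) * x t ^ j else 0)"
        by (rule sum.cong) auto
      then show ?thesis using i by (simp add: sum.delta)
    qed
    also have "\<dots> = (mat n n (\<lambda>(i,j). if i = j then x i - x n else 0) * mat n n (\<lambda>(i,k). x i ^ k)) $$ (i,j)"
      using i j by (simp add: scalar_prod_def atLeast0LessThan)
    finally show "mat_delete A n 0 $$ (i,j) = (mat n n (\<lambda>(i,j). if i = j then x i - x n else 0) * mat n n (\<lambda>(i,k). x i ^ k)) $$ (i,j)" .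
  qed (use AC in auto)
  also have "det (mat n n (\<lambda>(i,j). if i = j then x i - x n else 0) * mat n n (\<lambda>(i,k). x i ^ k)) =
     (\<Prod>i<n. x i - x n) * (\<Prod>j<n. \<Prod>i<j. x j - x i)"
    by (subst det_mult[of _ n]) (auto simp: det_diagonal_mat Suc.IH)
  finally have "det M = ((-1)^n * (\<Prod>i<n. x i - x n)) * (\<Prod>j<n. \<Prod>i<j. x j - x i)" by (simp add: mult.assoc)
  also have "(-1)^n * (\<Prod>i<n. x i - x n) = (\<Prod>i<n. x n - x i)"
    using prod_uminus[of "\<lambda>i. x i - x n" "{..<n}"] by simp
  finally show ?case by (simp add: M_def mult.commute)
qed

lemma poly_eq_sum_lessThan:
  fixes p :: "real poly"
  assumes "degree p < n"
  shows "poly p y = (\<Sum>t<n. coeff p t * y ^ t)"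
proof -
  have "poly p y = (\<Sum>t\<le>degree p. coeff p t * y ^ t)" by (rule poly_altdef)
  also have "\<dots> = (\<Sum>t<n. coeff p t * y ^ t)"
    by (rule sum.mono_neutral_left) (use assms in \<open>auto simp: coeff_eq_0\<close>)
  finally show ?thesis .
qed

lemma poly_basis_det:
  fixes p :: "nat \<Rightarrow> real poly" and x :: "nat \<Rightarrow> real"
  assumes deg: "\<And>k. k < n \<Longrightarrow> degree (p k) \<le> k"
  shows "det (mat n n (\<lambda>(i,k). poly (p k) (x i))) = (\<Prod>k<n. coeff (p k) k) * (\<Prod>j<n. \<Prod>i<j. x j - x i)"
proof -
  define V where "V = mat n n (\<lambda>(i,k). x i ^ k)"
  define C where "C = mat n n (\<lambda>(t,k). coeff (p k) t)"
  have VC: "V \<in> carrier_mat n n" "C \<in> carrier_mat n n" by (auto simp: V_def C_def)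
  have "mat n n (\<lambda>(i,k). poly (p k) (x i)) = V * C"
  proof (rule eq_matI)
    fix i k assume "i < dim_row (V * C)" "k < dim_col (V * C)"
    then have ik: "i < n" "k < n" using VC by auto
    have "poly (p k) (x i) = (\<Sum>t<n. coeff (p k) t * x i ^ t)"
      by (rule poly_eq_sum_lessThan) (use deg[OF ik(2)] ik in auto)
    then show "mat n n (\<lambda>(i,k). poly (p k) (x i)) $$ (i, k) = (V * C) $$ (i, k)"
      using ik by (simp add: V_def C_def scalar_prod_def atLeast0LessThan mult.commute)
  qed (use VC in auto)
  then have "det (mat n n (\<lambda>(i,k). poly (p k) (x i))) = det V * det C"
    using det_mult[OF VC] by simp
  moreover have "det V = (\<Prod>j<n. \<Prod>i<j. x j - x i)" unfolding V_def by (rule det_vandermonde)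
  moreover have "det C = (\<Prod>k<n. coeff (p k) k)"
  proof -
    have "det C = prod_list (diag_mat C)"
    proof (rule det_upper_triangular[OF _ VC(2)])
      show "upper_triangular C"
        unfolding upper_triangular_def C_def
      proof (intro allI impI)
        fix i j assume ij: "i < dim_row (mat n n (\<lambda>(t, k). coeff (p k) t))" "j < i"
        then have "degree (p j) \<le> j" using deg by auto
        then show "mat n n (\<lambda>(t, k). coeff (p k) t) $$ (i, j) = 0"
          using ij by (auto intro!: coeff_eq_0)
      qed
    qed
    also have "\<dots> = (\<Prod>k<n. coeff (p k) k)"
      by (auto simp: diag_mat_def C_def prod.distinct_set_conv_list[symmetric] atLeast0LessThan
          intro!: arg_cong[where f=prod_list] map_cong)
    finally show ?thesis .
  qed
  ultimately show ?thesis by (simp add: mult.commute)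
qed

definition binom_poly :: "nat \<Rightarrow> real poly" where
  "binom_poly k = smult (inverse (fact k)) (\<Prod>i<k. [:- of_nat i, 1:])"

lemma poly_binom_poly: "poly (binom_poly k) y = y gchoose k"
  by (simp add: binom_poly_def poly_prod gbinomial_prod_rev atLeast0LessThan field_simps)

lemma degree_binom_poly: "degree (binom_poly k) = k"
proof -
  have "degree (\<Prod>i<k. [:- of_nat i, 1::real:]) = (\<Sum>i<k. degree [:- of_nat i, 1::real:])"
    by (rule degree_prod_eq_sum_degree) auto
  then show ?thesis by (simp add: binom_poly_def)
qed

lemma lead_coeff_binom_poly: "coeff (binom_poly k) k = inverse (fact k)"
proof -
  have d: "degree (\<Prod>i<k. [:- of_nat i, 1::real:]) = k"
    using degree_binom_poly by (simp add: binom_poly_def)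
  have "lead_coeff (\<Prod>i<k. [:- of_nat i, 1::real:]) = 1"
    by (simp add: lead_coeff_prod)
  then show ?thesis using d by (simp add: binom_poly_def)
qed

lemma det_gchoose:
  "det (mat n n (\<lambda>(i,k). (x i :: real) gchoose k)) = (\<Prod>j<n. \<Prod>i<j. x j - x i) / (\<Prod>k<n. fact k)"
proof -
  have "det (mat n n (\<lambda>(i,k). x i gchoose k)) = det (mat n n (\<lambda>(i,k). poly (binom_poly k) (x i)))"
    by (simp add: poly_binom_poly)
  also have "\<dots> = (\<Prod>k<n. coeff (binom_poly k) k) * (\<Prod>j<n. \<Prod>i<j. x j - x i)"
    by (rule poly_basis_det) (simp add: degree_binom_poly)
  also have "\<dots> = (\<Prod>j<n. \<Prod>i<j. x j - x i) / (\<Prod>k<n. fact k)"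
    using prod_inversef[of "fact :: nat \<Rightarrow> real" "{..<n}"] by (simp add: lead_coeff_binom_poly divide_inverse mult.commute)
  finally show ?thesis .
qed

lemma prod_pairs_less:
  "(\<Prod>(i,j)\<in>{(i,j). i < j \<and> j < (n::nat)}. g i j) = (\<Prod>j<n. \<Prod>i<j. (g i j :: 'a::comm_monoid_mult))"
proof -
  have "(\<Prod>j<n. \<Prod>i<j. g i j) = (\<Prod>(j,i)\<in>(SIGMA j:{..<n}. {..<j}). g i j)"
    by (rule prod.Sigma) auto
  also have "\<dots> = (\<Prod>(i,j)\<in>{(i,j). i < j \<and> j < n}. g i j)"
    by (rule prod.reindex_bij_witness[where i="\<lambda>(i,j). (j,i)" and j="\<lambda>(j,i). (i,j)"]) auto
  finally show ?thesis by simp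
qed

lemma prod_diff_fact: "(\<Prod>i<j. real j - real i) = fact j"
proof -
  have "(\<Prod>i<j. real j - real i) = (\<Prod>i=0..<j. real (j - i))"
    by (rule prod.cong) (auto simp: of_nat_diff atLeast0LessThan)
  also have "\<dots> = fact j" by (simp add: fact_prod_rev)
  finally show ?thesis .
qed

lemma DimN_det:
  "DimN n la = det (mat n n (\<lambda>(i,k). real_of_int (int i - la!i) gchoose k))"
proof -
  have "DimN n la = (\<Prod>j<n. \<Prod>i<j. (real_of_int (la!i - la!j) - real i + real j) / (real j - real i))"
    unfolding DimN_def by (subst prod_pairs_less[where g="\<lambda>i j. (real_of_int (la!i - la!j) - real i + real j) / (real j - real i)"]) simp
  also have "\<dots> = (\<Prod>j<n. \<Prod>i<j. real_of_int (int j - la!j) - real_of_int (int i - la!i)) / (\<Prod>j<n. \<Prod>i<j. real j - real i)"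
    by (simp add: prod_dividef algebra_simps)
  also have "\<dots> = (\<Prod>j<n. \<Prod>i<j. real_of_int (int j - la!j) - real_of_int (int i - la!i)) / (\<Prod>k<n. fact k)"
    by (simp add: prod_diff_fact)
  also have "\<dots> = det (mat n n (\<lambda>(i,k). real_of_int (int i - la!i) gchoose k))"
    by (rule det_gchoose[symmetric])
  finally show ?thesis .
qed

(* Summing binomial coefficients over an integer interval telescopes (Pascal). *)
lemma sum_gchoose_telescope:
  assumes "a \<le> b"
  shows "(\<Sum>x\<in>{a..b-1}. real_of_int x gchoose k) = (real_of_int b gchoose Suc k) - (real_of_int a gchoose Suc k)"
proof -
  obtain d where d: "b = a + int d" using assms zle_iff_zadd by blast
  have "(\<Sum>x\<in>{a..a + int d - 1}. real_of_int x gchoose k) = (real_of_int (a + int d) gchoose Suc k) - (real_of_int a gchoose Suc k)"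
  proof (induction d)
    case 0 then show ?case by simp
  next
    case (Suc d)
    have "{a..a + int (Suc d) - 1} = insert (a + int d) {a..a + int d - 1}" by auto
    then have "(\<Sum>x\<in>{a..a + int (Suc d) - 1}. real_of_int x gchoose k) =
       (real_of_int (a + int d) gchoose k) + (\<Sum>x\<in>{a..a + int d - 1}. real_of_int x gchoose k)"
      by simp
    also have "\<dots> = (real_of_int (a + int d) gchoose k) + (real_of_int (a + int d) gchoose Suc k) - (real_of_int a gchoose Suc k)"
      using Suc by simp
    also have "(real_of_int (a + int d) gchoose k) + (real_of_int (a + int d) gchoose Suc k) = real_of_int (a + int (Suc d)) gchoose Suc k"
      using gbinomial_Suc_Suc[of "real_of_int (a + int d)" k] by (simp add: algebra_simps)
    finally show ?case .
  qed
  then show ?thesis using d by simp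
qed

(* Subtracting each row from the next reduces det [y_i gchoose k] by one dimension to a matrix of
   differences. *)
lemma det_gchoose_row_difference:
  "det (mat (Suc N) (Suc N) (\<lambda>(i,k). (y i::real) gchoose k)) =
   det (mat N N (\<lambda>(i,k). (y (Suc i) gchoose Suc k) - (y i gchoose Suc k)))"
proof -
  define M where "M = mat (Suc N) (Suc N) (\<lambda>(i,k). (y i::real) gchoose k)"
  define E where "E = mat (Suc N) (Suc N) (\<lambda>(i,t). if t = i then 1 else if Suc t = i then -1 else (0::real))"
  have MC: "M \<in> carrier_mat (Suc N) (Suc N)" and EC: "E \<in> carrier_mat (Suc N) (Suc N)"
    by (auto simp: M_def E_def)
  have detE: "det E = 1"
  proof -
    have "det E = prod_list (diag_mat E)"
      by (rule det_lower_triangular[OF _ EC]) (auto simp: E_def)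
    also have "\<dots> = 1" by (auto simp: diag_mat_def E_def prod.distinct_set_conv_list[symmetric] intro!: prod.neutral)
    finally show ?thesis .
  qed
  define B where "B = E * M"
  have BC: "B \<in> carrier_mat (Suc N) (Suc N)" using EC MC by (auto simp: B_def)
  have Bent: "B $$ (i,k) = (y i gchoose k) - (if i = 0 then 0 else y (i - 1) gchoose k)"
    if "i < Suc N" "k < Suc N" for i k
  proof -
    have "B $$ (i,k) = (\<Sum>t<Suc N. (if t = i then 1 else if Suc t = i then -1 else 0) * (y t gchoose k))"
      using that by (simp add: B_def E_def M_def scalar_prod_def atLeast0LessThan)
    also have "\<dots> = (\<Sum>t<Suc N. (if t = i then y t gchoose k else 0)) - (\<Sum>t<Suc N. (if Suc t = i then y t gchoose k else 0))"
      by (subst sum_subtractf[symmetric], rule sum.cong, auto)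
    also have "(\<Sum>t<Suc N. (if Suc t = i then y t gchoose k else 0)) = (if i = 0 then 0 else y (i - 1) gchoose k)"
    proof (cases i)
      case (Suc i')
      then have "(\<Sum>t<Suc N. (if Suc t = i then y t gchoose k else 0)) = (\<Sum>t<Suc N. (if t = i' then y t gchoose k else 0))"
        by (intro sum.cong) auto
      also have "\<dots> = y i' gchoose k" using that Suc by (simp add: sum.delta)
      finally show ?thesis using Suc by simp
    qed simp
    also have "(\<Sum>t<Suc N. (if t = i then y t gchoose k else 0)) = y i gchoose k" using that by (simp add: sum.delta)
    finally show ?thesis .
  qed
  have "det M = det B" using det_mult[OF EC MC] detE by (simp add: B_def)
  also have "det B = B $$ (0,0) * cofactor B 0 0"
    by (rule det_single_entry_column[OF BC]) (auto simp: Bent)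
  also have "\<dots> = det (mat_delete B 0 0)"
    using Bent[of 0 0] by (simp add: cofactor_def)
  also have "mat_delete B 0 0 = mat N N (\<lambda>(i,k). (y (Suc i) gchoose Suc k) - (y i gchoose Suc k))"
  proof (rule eq_matI)
    fix i j assume ij: "i < dim_row (mat N N (\<lambda>(i,k). (y (Suc i) gchoose Suc k) - (y i gchoose Suc k)))"
       "j < dim_col (mat N N (\<lambda>(i,k). (y (Suc i) gchoose Suc k) - (y i gchoose Suc k)))"
    then have i: "i < N" and j: "j < N" by auto
    have "mat_delete B 0 0 $$ (i,j) = B $$ (Suc i, Suc j)"
      using i j BC by (simp add: mat_delete_def)
    also have "\<dots> = (y (Suc i) gchoose Suc j) - (y i gchoose Suc j)" using Bent[of "Suc i" "Suc j"] i j by simp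
    finally show "mat_delete B 0 0 $$ (i,j) = mat N N (\<lambda>(i,k). (y (Suc i) gchoose Suc k) - (y i gchoose Suc k)) $$ (i,j)"
      using i j by simp
  qed (use BC in auto)
  finally show ?thesis by (simp add: M_def)
qed

(* Multilinearity in the rows: summing determinants over independent choices of each row. *)
lemma det_sum_over_PiE:
  fixes f :: "int \<Rightarrow> nat \<Rightarrow> real"
  assumes fin: "\<And>i. i < N \<Longrightarrow> finite (A i)"
  shows "(\<Sum>x\<in>PiE {0..<N} A. det (mat N N (\<lambda>(i,k). f (x i) k))) = det (mat N N (\<lambda>(i,k). \<Sum>a\<in>A i. f a k))"
proof -
  have "(\<Sum>x\<in>PiE {0..<N} A. det (mat N N (\<lambda>(i,k). f (x i) k))) =
        (\<Sum>x\<in>PiE {0..<N} A. \<Sum>p\<in>{p. p permutes {0..<N}}. signof p * (\<Prod>i=0..<N. f (x i) (p i)))"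
    by (rule sum.cong[OF refl], subst det_def'[of _ N]) (auto intro!: sum.cong prod.cong)
  also have "\<dots> = (\<Sum>p\<in>{p. p permutes {0..<N}}. \<Sum>x\<in>PiE {0..<N} A. signof p * (\<Prod>i=0..<N. f (x i) (p i)))"
    by (rule sum.swap)
  also have "\<dots> = (\<Sum>p\<in>{p. p permutes {0..<N}}. signof p * (\<Prod>i=0..<N. \<Sum>a\<in>A i. f a (p i)))"
  proof (rule sum.cong[OF refl])
    fix p
    have "(\<Prod>i=0..<N. \<Sum>a\<in>A i. f a (p i)) = (\<Sum>x\<in>PiE {0..<N} A. \<Prod>i=0..<N. f (x i) (p i))"
      by (rule prod_sum_PiE) (use fin in auto)
    then show "(\<Sum>x\<in>PiE {0..<N} A. signof p * (\<Prod>i=0..<N. f (x i) (p i))) = signof p * (\<Prod>i=0..<N. \<Sum>a\<in>A i. f a (p i))"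
      by (simp add: sum_distrib_left)
  qed
  also have "\<dots> = det (mat N N (\<lambda>(i,k). \<Sum>a\<in>A i. f a k))"
    by (subst det_def'[of _ N]) (auto intro!: sum.cong prod.cong)
  finally show ?thesis .
qed

(* The branching rule for Dim_N and its consequence: Dim_N counts Gelfand-Tsetlin patterns. *)

lemma sigs_antimono:
  assumes "nu \<in> sigs M" "i \<le> j" "j < M"
  shows "nu!j \<le> nu!i"
proof (cases "i = j")
  case False
  then show ?thesis using assms by (auto simp: sigs_def sorted_wrt_iff_nth_less)
qed simp

lemma interlacing_iff:
  assumes nu: "nu \<in> sigs (Suc N)"
  shows "(la \<in> sigs N \<and> interlace la nu) \<longleftrightarrow> (length la = N \<and> (\<forall>i<N. nu!(Suc i) \<le> la!i \<and> la!i \<le> nu!i))"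
proof
  assume "la \<in> sigs N \<and> interlace la nu"
  then show "length la = N \<and> (\<forall>i<N. nu!(Suc i) \<le> la!i \<and> la!i \<le> nu!i)"
    by (auto simp: sigs_def interlace_def)
next
  assume h: "length la = N \<and> (\<forall>i<N. nu!(Suc i) \<le> la!i \<and> la!i \<le> nu!i)"
  have "sorted_wrt (\<ge>) la"
    unfolding sorted_wrt_iff_nth_less
  proof (intro allI impI)
    fix i j assume ij: "i < j" "j < length la"
    have "la!j \<le> nu!j" using h ij by auto
    also have "nu!j \<le> nu!(Suc i)" using sigs_antimono[OF nu, of "Suc i" j] ij h by auto
    also have "nu!(Suc i) \<le> la!i" using h ij by auto
    finally show "la!j \<le> la!i" .
  qed
  then show "la \<in> sigs N \<and> interlace la nu"
    using h nu by (auto simp: sigs_def interlace_def)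
qed

(* Branching rule: Dim_(N+1) nu is the sum of Dim_N la over la interlacing nu. In shifted
   coordinates the sum ranges over a box, and the determinant formula turns it into a telescoping
   sum. *)
theorem DimN_branching:
  assumes nu: "nu \<in> sigs (Suc N)"
  shows "DimN (Suc N) nu = (\<Sum>la\<in>{la \<in> sigs N. interlace la nu}. DimN N la)"
proof -
  define w where "w i = int i - nu!i" for i
  define A where "A i = {w i .. w (Suc i) - 1}" for i
  have wle: "w i \<le> w (Suc i)" if "i < N" for i
    using sigs_antimono[OF nu, of i "Suc i"] that by (simp add: w_def)
  have S: "{la \<in> sigs N. interlace la nu} = {la. length la = N \<and> (\<forall>i<N. nu!(Suc i) \<le> la!i \<and> la!i \<le> nu!i)}"
    using interlacing_iff[OF nu] by blast
  have "(\<Sum>la\<in>{la \<in> sigs N. interlace la nu}. DimN N la) =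
        (\<Sum>la\<in>{la. length la = N \<and> (\<forall>i<N. nu!(Suc i) \<le> la!i \<and> la!i \<le> nu!i)}.
           det (mat N N (\<lambda>(i,k). real_of_int (int i - la!i) gchoose k)))"
    unfolding S by (simp add: DimN_det)
  also have "\<dots> = (\<Sum>x\<in>PiE {0..<N} A. det (mat N N (\<lambda>(i,k). real_of_int (x i) gchoose k)))"
  proof (rule sum.reindex_bij_witness[where i="\<lambda>x. map (\<lambda>i. int i - x i) [0..<N]"
        and j="\<lambda>la. restrict (\<lambda>i. int i - la!i) {0..<N}"])
    fix la assume la: "la \<in> {la. length la = N \<and> (\<forall>i<N. nu!(Suc i) \<le> la!i \<and> la!i \<le> nu!i)}"
    show "map (\<lambda>i. int i - restrict (\<lambda>i. int i - la!i) {0..<N} i) [0..<N] = la"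
      using la by (auto intro!: nth_equalityI)
    show "restrict (\<lambda>i. int i - la!i) {0..<N} \<in> PiE {0..<N} A"
      using la by (auto simp: A_def w_def)
    show "det (mat N N (\<lambda>(i,k). real_of_int (restrict (\<lambda>i. int i - la!i) {0..<N} i) gchoose k)) =
          det (mat N N (\<lambda>(i,k). real_of_int (int i - la!i) gchoose k))"
      by (rule arg_cong[where f=det], rule eq_matI) auto
  next
    fix x assume x: "x \<in> PiE {0..<N} A"
    show "restrict (\<lambda>i. int i - map (\<lambda>i. int i - x i) [0..<N] ! i) {0..<N} = x"
    proof -
      have "restrict (\<lambda>i. int i - map (\<lambda>i. int i - x i) [0..<N] ! i) {0..<N} = restrict x {0..<N}"
        by (rule restrict_ext) simp
      also have "\<dots> = x" using x by (simp add: PiE_restrict)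
      finally show ?thesis .
    qed
    show "map (\<lambda>i. int i - x i) [0..<N] \<in> {la. length la = N \<and> (\<forall>i<N. nu!(Suc i) \<le> la!i \<and> la!i \<le> nu!i)}"
      using x by (force simp: A_def w_def PiE_iff)
  qed
  also have "\<dots> = det (mat N N (\<lambda>(i,k). \<Sum>a\<in>A i. real_of_int a gchoose k))"
    by (rule det_sum_over_PiE) (simp add: A_def)
  also have "\<dots> = det (mat N N (\<lambda>(i,k). (real_of_int (w (Suc i)) gchoose Suc k) - (real_of_int (w i) gchoose Suc k)))"
    by (rule arg_cong[where f=det], rule eq_matI) (auto simp: A_def sum_gchoose_telescope wle)
  also have "\<dots> = det (mat (Suc N) (Suc N) (\<lambda>(i,k). real_of_int (w i) gchoose k))"
    by (rule det_gchoose_row_difference[symmetric])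
  also have "\<dots> = DimN (Suc N) nu"
    by (simp add: DimN_det w_def)
  finally show ?thesis ..
qed

definition chains :: "nat \<Rightarrow> nat \<Rightarrow> int list \<Rightarrow> int list \<Rightarrow> int list list set" where
  "chains K N ka nu = {c :: int list list.
      length c = N - K + 1 \<and> c!0 = ka \<and> c!(N - K) = nu \<and>
      (\<forall>j \<le> N - K. c!j \<in> sigs (K + j)) \<and>
      (\<forall>j < N - K. interlace (c!j) (c!(Suc j)))}"

lemma DimKN_chains: "DimKN K N ka nu = card (chains K N ka nu)"
  by (simp add: DimKN_def chains_def)

lemma finite_interlacing: "finite {la \<in> sigs N. interlace la nu}"
proof (cases "length nu = Suc N")
  case True
  then have ne: "set nu \<noteq> {}" by auto
  have "{la \<in> sigs N. interlace la nu} \<subseteq> {la. set la \<subseteq> {Min (set nu)..Max (set nu)} \<and> length la = N}"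
  proof (clarify)
    fix la assume la: "la \<in> sigs N" "interlace la nu"
    then have len: "length la = N" by (simp add: sigs_def)
    have "set la \<subseteq> {Min (set nu)..Max (set nu)}"
    proof
      fix v assume "v \<in> set la"
      then obtain i where i: "i < N" "v = la!i" using len by (auto simp: in_set_conv_nth)
      have "nu!i \<in> set nu" "nu!(Suc i) \<in> set nu" using i True by auto
      then have "nu!i \<le> Max (set nu)" "Min (set nu) \<le> nu!(Suc i)" by auto
      moreover have "nu!(Suc i) \<le> la!i" "la!i \<le> nu!i" using la i len by (auto simp: interlace_def)
      ultimately show "v \<in> {Min (set nu)..Max (set nu)}" using i by auto
    qed
    then show "set la \<subseteq> {Min (set nu)..Max (set nu)} \<and> length la = N" using len by simp
  qed
  moreover have "finite {la. set la \<subseteq> {Min (set nu)..Max (set nu)} \<and> length la = N}"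
    by (rule finite_lists_length_eq) simp
  ultimately show ?thesis by (rule finite_subset)
next
  case False
  then have "{la \<in> sigs N. interlace la nu} = {}" by (auto simp: sigs_def interlace_def)
  then show ?thesis by (metis finite.emptyI)
qed

lemma chains_Suc_subset:
  assumes "K \<le> N"
  shows "chains K (Suc N) ka nu \<subseteq> (\<Union>la\<in>{la \<in> sigs N. interlace la nu}. (\<lambda>c. c @ [nu]) ` chains K N ka la)"
proof
  fix c assume c: "c \<in> chains K (Suc N) ka nu"
  define d where "d = N - K"
  have SN: "Suc N - K = Suc d" using assms by (simp add: d_def)
  have N: "N = K + d" using assms by (simp add: d_def)
  from c have len: "length c = Suc (Suc d)" and c0: "c!0 = ka" and cl: "c!(Suc d) = nu"
    and sg: "\<And>j. j \<le> Suc d \<Longrightarrow> c!j \<in> sigs (K + j)"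
    and il: "\<And>j. j < Suc d \<Longrightarrow> interlace (c!j) (c!(Suc j))"
    by (auto simp: chains_def SN)
  define c' where "c' = take (Suc d) c"
  have ceq: "c = c' @ [nu]"
  proof -
    have "c = take (Suc d) c @ drop (Suc d) c" by simp
    moreover have "drop (Suc d) c = [nu]" using len cl
      by (metis Cons_nth_drop_Suc One_nat_def drop_all le_refl lessI plus_1_eq_Suc add.commute)
    ultimately show ?thesis by (simp add: c'_def)
  qed
  have c'nth: "c'!j = c!j" if "j < Suc d" for j using that by (simp add: c'_def)
  have "c' \<in> chains K N ka (c!d)"
    unfolding chains_def using len c0 sg il assms
    by (auto simp: c'nth c'_def d_def[symmetric] N)
  moreover have "c!d \<in> sigs N" using sg[of d] N by simp
  moreover have "interlace (c!d) nu" using il[of d] cl by simp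
  ultimately show "c \<in> (\<Union>la\<in>{la \<in> sigs N. interlace la nu}. (\<lambda>c. c @ [nu]) ` chains K N ka la)"
    using ceq by blast
qed

lemma chains_Suc_supset:
  assumes "K \<le> N" "nu \<in> sigs (Suc N)"
  shows "(\<Union>la\<in>{la \<in> sigs N. interlace la nu}. (\<lambda>c. c @ [nu]) ` chains K N ka la) \<subseteq> chains K (Suc N) ka nu"
proof clarify
  fix la c' assume la: "la \<in> sigs N" "interlace la nu" and c': "c' \<in> chains K N ka la"
  define d where "d = N - K"
  have SN: "Suc N - K = Suc d" using assms by (simp add: d_def)
  have N: "N = K + d" using assms by (simp add: d_def)
  from c' have len: "length c' = Suc d" and c0: "c'!0 = ka" and cl: "c'!d = la"
    and sg: "\<And>j. j \<le> d \<Longrightarrow> c'!j \<in> sigs (K + j)"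
    and il: "\<And>j. j < d \<Longrightarrow> interlace (c'!j) (c'!(Suc j))"
    by (auto simp: chains_def d_def)
  show "c' @ [nu] \<in> chains K (Suc N) ka nu"
    unfolding chains_def SN
  proof (intro CollectI conjI allI impI)
    show "length (c' @ [nu]) = Suc d + 1" using len by simp
    show "(c' @ [nu])!0 = ka" using len c0 by (simp add: nth_append)
    show "(c' @ [nu])!(Suc d) = nu" using len by (simp add: nth_append)
  next
    fix j assume j: "j \<le> Suc d"
    show "(c' @ [nu])!j \<in> sigs (K + j)"
    proof (cases "j \<le> d")
      case True then show ?thesis using sg[of j] len by (simp add: nth_append)
    next
      case False then have "j = Suc d" using j by simp
      then show ?thesis using assms(2) len N by (simp add: nth_append)
    qed
  next
    fix j assume j: "j < Suc d"
    show "interlace ((c' @ [nu])!j) ((c' @ [nu])!(Suc j))"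
    proof (cases "j < d")
      case True then show ?thesis using il[of j] len by (simp add: nth_append)
    next
      case False then have "j = d" using j by simp
      then show ?thesis using la(2) cl len by (simp add: nth_append)
    qed
  qed
qed

lemma finite_chains: "K \<le> N \<Longrightarrow> finite (chains K N ka nu)"
proof (induction N arbitrary: nu rule: dec_induct)
  case base
  have "chains K K ka nu \<subseteq> {[ka]}"
    by (auto simp: chains_def length_Suc_conv)
  then show ?case by (rule finite_subset) simp
next
  case (step N)
  show ?case
    by (rule finite_subset[OF chains_Suc_subset[OF step(1)]])
       (use finite_interlacing step(3) in blast)
qed

(* The chain count satisfies the same branching recursion as Dim_N. *)
lemma DimKN_Suc:
  assumes "K \<le> N" "nu \<in> sigs (Suc N)"
  shows "DimKN K (Suc N) ka nu = (\<Sum>la\<in>{la \<in> sigs N. interlace la nu}. DimKN K N ka la)"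
proof -
  have eq: "chains K (Suc N) ka nu = (\<Union>la\<in>{la \<in> sigs N. interlace la nu}. (\<lambda>c. c @ [nu]) ` chains K N ka la)"
    using chains_Suc_subset[OF assms(1)] chains_Suc_supset[OF assms] by blast
  have disj: "(\<lambda>c. c @ [nu]) ` chains K N ka la \<inter> (\<lambda>c. c @ [nu]) ` chains K N ka la' = {}"
    if "la \<noteq> la'" for la la'
  proof (rule ccontr)
    assume "(\<lambda>c. c @ [nu]) ` chains K N ka la \<inter> (\<lambda>c. c @ [nu]) ` chains K N ka la' \<noteq> {}"
    then obtain c c' where c: "c \<in> chains K N ka la" and c': "c' \<in> chains K N ka la'" and e: "c @ [nu] = c' @ [nu]"
      by blast
    then have "c = c'" by simp
    then show False using c c' that by (auto simp: chains_def)
  qed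
  have "card (\<Union>la\<in>{la \<in> sigs N. interlace la nu}. (\<lambda>c. c @ [nu]) ` chains K N ka la) =
        (\<Sum>la\<in>{la \<in> sigs N. interlace la nu}. card ((\<lambda>c. c @ [nu]) ` chains K N ka la))"
    by (rule card_UN_disjoint) (use finite_interlacing finite_chains[OF assms(1)] disj in auto)
  also have "\<dots> = (\<Sum>la\<in>{la \<in> sigs N. interlace la nu}. card (chains K N ka la))"
    by (rule sum.cong[OF refl], rule card_image) (auto simp: inj_on_def)
  finally show ?thesis using eq by (simp add: DimKN_chains)
qed

theorem DimN_eq_DimKN:
  "nu \<in> sigs N \<Longrightarrow> DimN N nu = real (DimKN 0 N [] nu)"
proof (induction N arbitrary: nu)
  case 0
  then have nu: "nu = []" by (simp add: sigs_def)
  have "chains 0 0 [] [] = {[[]]}"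
    by (auto simp: chains_def sigs_def length_Suc_conv)
  then show ?case using nu by (simp add: DimN_def DimKN_chains)
next
  case (Suc N)
  have "DimN (Suc N) nu = (\<Sum>la\<in>{la \<in> sigs N. interlace la nu}. DimN N la)"
    by (rule DimN_branching[OF Suc.prems])
  also have "\<dots> = (\<Sum>la\<in>{la \<in> sigs N. interlace la nu}. real (DimKN 0 N [] la))"
    by (rule sum.cong) (auto intro: Suc.IH)
  also have "\<dots> = real (DimKN 0 (Suc N) [] nu)"
    by (simp add: DimKN_Suc[OF _ Suc.prems])
  finally show ?case .
qed

(* Young diagrams as signatures and as sets of cells. *)

lemma pad_nth: "i < N \<Longrightarrow> pad N la ! i = int (if i < length la then la!i else 0)"
  by (auto simp: pad_def nth_append)

lemma pad_length: "length la \<le> N \<Longrightarrow> length (pad N la) = N"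
  by (simp add: pad_def)

lemma pad_in_sigs:
  assumes "young la" "length la \<le> N"
  shows "pad N la \<in> sigs N"
proof -
  have s: "sorted_wrt (\<ge>) la" using assms(1) by (simp add: young_def)
  have "sorted_wrt (\<ge>) (map int la)" using s by (simp add: sorted_wrt_map)
  moreover have "sorted_wrt (\<ge>) (replicate (N - length la) (0::int))" by (simp add: sorted_wrt_iff_nth_less)
  ultimately show ?thesis using assms(2) by (auto simp: sigs_def pad_def sorted_wrt_append)
qed

lemma cells_eq_Sigma: "cells l = Sigma {..<length l} (\<lambda>i. {..<l!i})"
  by (auto simp: cells_def)

lemma finite_cells: "finite (cells l)"
  by (simp add: cells_eq_Sigma)

lemma card_cells: "card (cells l) = sum_list l"
  by (simp add: cells_eq_Sigma card_SigmaI sum_list_sum_nth atLeast0LessThan)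

lemma size_yd_mono:
  assumes "yd_subset mu la"
  shows "size_yd mu \<le> size_yd la"
proof -
  have "cells mu \<subseteq> cells la" using assms by (auto simp: cells_def yd_subset_def)
  then have "card (cells mu) \<le> card (cells la)" by (rule card_mono[OF finite_cells])
  then show ?thesis by (simp add: card_cells size_yd_def)
qed

(* Chains from mu (padded to length K) to la (padded to length K+m) versus semistandard fillings
   of the skew shape la/mu with entries in 1..m, weakly increasing along rows and strictly
   increasing down columns. The filling records, for each cell (i,j), the level at which the i-th
   part first exceeds j. *)

locale skew =
  fixes la mu :: "nat list" and K m :: nat
  assumes young_la: "young la" and young_mu: "young mu" and sub: "yd_subset mu la"
    and lenmu: "length mu \<le> K" and lenla: "length la \<le> K + m"

begin

definition la_row :: "nat \<Rightarrow> nat" where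
  "la_row i = (if i < length la then la!i else 0)"

definition mu_row :: "nat \<Rightarrow> nat" where
  "mu_row i = (if i < length mu then mu!i else 0)"

definition skew_cells :: "(nat \<times> nat) set" where
  "skew_cells = cells la - cells mu"

lemma skew_cells_iff: "(i,j) \<in> skew_cells \<longleftrightarrow> mu_row i \<le> j \<and> j < la_row i"
  by (auto simp: skew_cells_def cells_def la_row_def mu_row_def)

lemma la_row_mono: "la_row (Suc i) \<le> la_row i"
  using young_la by (auto simp: la_row_def young_def sorted_wrt_iff_nth_less)

lemma mu_row_mono: "mu_row (Suc i) \<le> mu_row i"
  using young_mu by (auto simp: mu_row_def young_def sorted_wrt_iff_nth_less)

lemma mu_row_le_la_row: "mu_row i \<le> la_row i"
  using sub by (auto simp: mu_row_def la_row_def yd_subset_def)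

lemma mu_row_zero: "K \<le> i \<Longrightarrow> mu_row i = 0"
  using lenmu by (simp add: mu_row_def)

definition Chains :: "int list list set" where
  "Chains = chains K (K+m) (pad K mu) (pad (K+m) la)"

definition SSYT :: "(nat \<times> nat \<Rightarrow> nat) set" where
  "SSYT = {F. (\<forall>x. x \<notin> skew_cells \<longrightarrow> F x = 0) \<and> (\<forall>x\<in>skew_cells. 1 \<le> F x \<and> F x \<le> m) \<and>
     (\<forall>i j. (i,j) \<in> skew_cells \<and> (i,Suc j) \<in> skew_cells \<longrightarrow> F (i,j) \<le> F (i,Suc j)) \<and>
     (\<forall>i j. (i,j) \<in> skew_cells \<and> (Suc i,j) \<in> skew_cells \<longrightarrow> F (i,j) < F (Suc i,j))}"

(* Part i of the t-th signature of a chain (zero beyond its length). *)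
definition part :: "int list list \<Rightarrow> nat \<Rightarrow> nat \<Rightarrow> int" where
  "part c t i = (if i < K + t then (c!t)!i else 0)"

(* Number of cells in row i of la with entry at most t (cells of mu count as entry 0). *)
definition fill_count :: "(nat \<times> nat \<Rightarrow> nat) \<Rightarrow> nat \<Rightarrow> nat \<Rightarrow> nat" where
  "fill_count F t i = card {j. j < la_row i \<and> F (i,j) \<le> t}"

definition tab_of_chain :: "int list list \<Rightarrow> nat \<times> nat \<Rightarrow> nat" where
  "tab_of_chain c = (\<lambda>(i,j). if (i,j) \<in> skew_cells then card {t. t \<le> m \<and> part c t i \<le> int j} else 0)"

definition chain_of_tab :: "(nat \<times> nat \<Rightarrow> nat) \<Rightarrow> int list list" where
  "chain_of_tab F = map (\<lambda>t. map (\<lambda>i. int (fill_count F t i)) [0..<K+t]) [0..<Suc m]"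

lemma Chains_iff: "c \<in> Chains \<longleftrightarrow> length c = Suc m \<and> c!0 = pad K mu \<and> c!m = pad (K+m) la \<and>
   (\<forall>j\<le>m. c!j \<in> sigs (K+j)) \<and> (\<forall>j<m. interlace (c!j) (c!(Suc j)))"
  by (simp add: Chains_def chains_def)

lemma Chains_length: "c \<in> Chains \<Longrightarrow> t \<le> m \<Longrightarrow> length (c!t) = K + t"
  by (auto simp: Chains_iff sigs_def)

lemma Chains_interlace: "c \<in> Chains \<Longrightarrow> t < m \<Longrightarrow> i < K + t \<Longrightarrow> (c!t)!i \<le> (c!(Suc t))!i \<and> (c!(Suc t))!(Suc i) \<le> (c!t)!i"
  using Chains_length[of c t] by (auto simp: Chains_iff interlace_def)

lemma part_nonneg: "c \<in> Chains \<Longrightarrow> t \<le> m \<Longrightarrow> 0 \<le> part c t i"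
proof (induction "m - t" arbitrary: t i)
  case 0
  then have t: "t = m" by simp
  show ?case using 0 t by (auto simp: part_def Chains_iff pad_nth)
next
  case (Suc d)
  then have tm: "t < m" by simp
  show ?case
  proof (cases "i < K + t")
    case True
    have "(c!(Suc t))!(Suc i) \<le> (c!t)!i" using Chains_interlace[OF Suc(3) tm True] by simp
    moreover have "0 \<le> part c (Suc t) (Suc i)" using Suc tm by (intro Suc.hyps) auto
    ultimately show ?thesis using True by (simp add: part_def)
  qed (simp add: part_def)
qed

lemma part_le_Suc: "c \<in> Chains \<Longrightarrow> t < m \<Longrightarrow> part c t i \<le> part c (Suc t) i"
proof (cases "i < K + t")
  case True
  assume "c \<in> Chains" "t < m"
  then show ?thesis using Chains_interlace[OF _ _ True] True by (simp add: part_def)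
next
  case False
  assume "c \<in> Chains" "t < m"
  then show ?thesis using False part_nonneg[of c "Suc t" i] by (simp add: part_def)
qed

lemma part_diag: "c \<in> Chains \<Longrightarrow> t < m \<Longrightarrow> part c (Suc t) (Suc i) \<le> part c t i"
proof (cases "i < K + t")
  case True
  assume "c \<in> Chains" "t < m"
  then show ?thesis using Chains_interlace[OF _ _ True] True by (simp add: part_def)
next
  case False
  assume "c \<in> Chains" "t < m"
  then show ?thesis using False part_nonneg[of c t i] by (simp add: part_def)
qed

lemma part_mono:
  assumes c: "c \<in> Chains" and tt: "t \<le> t'" and tm: "t' \<le> m"
  shows "part c t i \<le> part c t' i"
  using tt tm
proof (induction t' rule: dec_induct)
  case (step t')
  then show ?case using part_le_Suc[OF c, of t' i] by simp
qed simp

lemma part_0: "c \<in> Chains \<Longrightarrow> part c 0 i = int (mu_row i)"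
  using lenmu by (auto simp: part_def Chains_iff pad_nth mu_row_def)

lemma part_m: "c \<in> Chains \<Longrightarrow> part c m i = int (la_row i)"
  using lenla by (auto simp: part_def Chains_iff pad_nth la_row_def)

definition below_times :: "int list list \<Rightarrow> nat \<Rightarrow> nat \<Rightarrow> nat set" where
  "below_times c i j = {t. t \<le> m \<and> part c t i \<le> int j}"

lemma below_times_eq: "c \<in> Chains \<Longrightarrow> below_times c i j = {..<card (below_times c i j)}"
  by (rule down_closed_eq_lessThan) (auto simp: below_times_def intro: order_trans[OF part_mono])

lemma below_times_mem: "c \<in> Chains \<Longrightarrow> t \<in> below_times c i j \<longleftrightarrow> t < card (below_times c i j)"
  using below_times_eq by blast

lemma below_times_card_le: "c \<in> Chains \<Longrightarrow> (i,j) \<in> skew_cells \<Longrightarrow> 1 \<le> card (below_times c i j) \<and> card (below_times c i j) \<le> m"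
proof -
  assume c: "c \<in> Chains" and ij: "(i,j) \<in> skew_cells"
  have "0 \<in> below_times c i j" using part_0[OF c] ij by (auto simp: below_times_def skew_cells_iff)
  then have "0 < card (below_times c i j)" using below_times_mem[OF c] by blast
  moreover have "m \<notin> below_times c i j" using part_m[OF c] ij by (auto simp: below_times_def skew_cells_iff)
  then have "\<not> m < card (below_times c i j)" using below_times_mem[OF c] by blast
  ultimately show ?thesis by simp
qed

lemma tab_of_chain_SSYT: "c \<in> Chains \<Longrightarrow> tab_of_chain c \<in> SSYT"
proof -
  assume c: "c \<in> Chains"
  have PhiT: "tab_of_chain c (i,j) = (if (i,j) \<in> skew_cells then card (below_times c i j) else 0)" for i j
    by (simp add: tab_of_chain_def below_times_def)
  show ?thesis
    unfolding SSYT_def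
  proof (intro CollectI conjI allI impI ballI)
    fix x assume "x \<notin> skew_cells" then show "tab_of_chain c x = 0" by (auto simp: tab_of_chain_def split: prod.splits)
  next
    fix x assume x: "x \<in> skew_cells"
    obtain i j where ij: "x = (i,j)" by force
    show "1 \<le> tab_of_chain c x" "tab_of_chain c x \<le> m" using below_times_card_le[OF c, of i j] x ij
      by (auto simp: PhiT)
  next
    fix i j assume h: "(i,j) \<in> skew_cells \<and> (i,Suc j) \<in> skew_cells"
    have "below_times c i j \<subseteq> below_times c i (Suc j)" by (auto simp: below_times_def)
    then have "card (below_times c i j) \<le> card (below_times c i (Suc j))" by (rule card_mono[rotated]) (simp add: below_times_def)
    then show "tab_of_chain c (i,j) \<le> tab_of_chain c (i,Suc j)" using h by (simp add: PhiT)
  next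
    fix i j assume h: "(i,j) \<in> skew_cells \<and> (Suc i,j) \<in> skew_cells"
    define a where "a = card (below_times c i j)"
    have a1: "1 \<le> a" "a \<le> m" using below_times_card_le[OF c] h by (auto simp: a_def)
    have "a - 1 \<in> below_times c i j" using below_times_mem[OF c] a1 by (simp add: a_def)
    then have v1: "part c (a - 1) i \<le> int j" by (simp add: below_times_def)
    have "part c a (Suc i) \<le> part c (a - 1) i" using part_diag[OF c, of "a - 1" i] a1 by simp
    then have "a \<in> below_times c (Suc i) j" using v1 a1 by (simp add: below_times_def)
    then have "a < card (below_times c (Suc i) j)" using below_times_mem[OF c] by blast
    then show "tab_of_chain c (i,j) < tab_of_chain c (Suc i,j)" using h by (simp add: PhiT a_def)
  qed
qed

lemma SSYTD:
  assumes "F \<in> SSYT"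
  shows "\<And>x. x \<notin> skew_cells \<Longrightarrow> F x = 0" "\<And>x. x \<in> skew_cells \<Longrightarrow> 1 \<le> F x" "\<And>x. x \<in> skew_cells \<Longrightarrow> F x \<le> m"
    "\<And>i j. (i,j) \<in> skew_cells \<Longrightarrow> (i,Suc j) \<in> skew_cells \<Longrightarrow> F (i,j) \<le> F (i,Suc j)"
    "\<And>i j. (i,j) \<in> skew_cells \<Longrightarrow> (Suc i,j) \<in> skew_cells \<Longrightarrow> F (i,j) < F (Suc i,j)"
  using assms by (auto simp: SSYT_def)

lemma SSYT_row_weak:
  assumes F: "F \<in> SSYT" and jj: "j \<le> j'" "j' < la_row i"
  shows "F (i,j) \<le> F (i,j')"
  using jj
proof (induction j' rule: dec_induct)
  case (step k)
  have "F (i,k) \<le> F (i,Suc k)"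
  proof (cases "(i,k) \<in> skew_cells")
    case True
    then have "(i,Suc k) \<in> skew_cells" using step by (auto simp: skew_cells_iff)
    then show ?thesis using SSYTD(4)[OF F] True by blast
  qed (simp add: SSYTD(1)[OF F])
  then show ?case using step by simp
qed simp

lemma SSYT_col_weak:
  assumes F: "F \<in> SSYT" and j: "j < la_row (Suc i)"
  shows "F (i,j) \<le> F (Suc i,j)"
proof (cases "(i,j) \<in> skew_cells")
  case True
  show ?thesis
  proof (cases "(Suc i,j) \<in> skew_cells")
    case True
    then show ?thesis using SSYTD(5)[OF F] \<open>(i,j) \<in> skew_cells\<close> by fastforce
  next
    case False
    then have "j < mu_row (Suc i)" using j by (auto simp: skew_cells_iff)
    then have "j < mu_row i" using mu_row_mono[of i] by simp
    then show ?thesis using True by (simp add: skew_cells_iff)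
  qed
qed (simp add: SSYTD(1)[OF F])

lemma SSYT_col_strict:
  assumes F: "F \<in> SSYT" and ij: "(Suc i,j) \<in> skew_cells"
  shows "F (i,j) < F (Suc i,j)"
proof (cases "(i,j) \<in> skew_cells")
  case True then show ?thesis using SSYTD(5)[OF F] ij by blast
next
  case False then show ?thesis using SSYTD(1,2)[OF F] ij by fastforce
qed

(* Column strictness forces an entry in row i to exceed i - K. *)
lemma SSYT_row_bound:
  assumes F: "F \<in> SSYT"
  shows "(i,j) \<in> skew_cells \<Longrightarrow> i < K + F (i,j)"
proof (induction i)
  case 0 then show ?case using SSYTD(2)[OF F] by fastforce
next
  case (Suc i)
  show ?case
  proof (cases "(i,j) \<in> skew_cells")
    case True
    then have "i < K + F (i,j)" by (rule Suc.IH)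
    moreover have "F (i,j) < F (Suc i,j)" using SSYTD(5)[OF F] True Suc.prems by blast
    ultimately show ?thesis by simp
  next
    case False
    have "j < la_row (Suc i)" using Suc.prems by (simp add: skew_cells_iff)
    then have "j < la_row i" using la_row_mono[of i] by simp
    then have "j < mu_row i" using False by (auto simp: skew_cells_iff)
    then have "i < K" using mu_row_zero[of i] by (cases "K \<le> i") auto
    then show ?thesis using SSYTD(2)[OF F] Suc.prems by fastforce
  qed
qed

definition fill_prefix :: "(nat \<times> nat \<Rightarrow> nat) \<Rightarrow> nat \<Rightarrow> nat \<Rightarrow> nat set" where
  "fill_prefix F t i = {j. j < la_row i \<and> F (i,j) \<le> t}"

lemma fill_prefix_eq: "F \<in> SSYT \<Longrightarrow> fill_prefix F t i = {..<fill_count F t i}"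
  unfolding fill_count_def fill_prefix_def[symmetric]
  by (rule down_closed_eq_lessThan) (auto simp: fill_prefix_def intro: order_trans[OF SSYT_row_weak])

lemma fill_count_iff: "F \<in> SSYT \<Longrightarrow> j < la_row i \<Longrightarrow> j < fill_count F t i \<longleftrightarrow> F (i,j) \<le> t"
  using fill_prefix_eq[of F t i] by (auto simp: fill_prefix_def set_eq_iff)

lemma fill_count_0: "F \<in> SSYT \<Longrightarrow> fill_count F 0 i = mu_row i"
proof -
  assume F: "F \<in> SSYT"
  have "{j. j < la_row i \<and> F (i,j) \<le> 0} = {..<mu_row i}"
  proof -
    have "(j < la_row i \<and> F (i,j) \<le> 0) \<longleftrightarrow> j < mu_row i" for j
    proof
      assume j: "j < la_row i \<and> F (i,j) \<le> 0"
      have "(i,j) \<notin> skew_cells"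
      proof
        assume "(i,j) \<in> skew_cells" then have "1 \<le> F (i,j)" by (rule SSYTD(2)[OF F])
        then show False using j by simp
      qed
      then show "j < mu_row i" using j by (auto simp: skew_cells_iff)
    next
      assume j: "j < mu_row i"
      then have "(i,j) \<notin> skew_cells" by (simp add: skew_cells_iff)
      then have "F (i,j) = 0" by (rule SSYTD(1)[OF F])
      then show "j < la_row i \<and> F (i,j) \<le> 0" using j mu_row_le_la_row[of i] by simp
    qed
    then show ?thesis by auto
  qed
  then show ?thesis by (simp add: fill_count_def)
qed

lemma fill_count_m: "F \<in> SSYT \<Longrightarrow> fill_count F m i = la_row i"
proof -
  assume F: "F \<in> SSYT"
  have "F (i,j) \<le> m" for j
    using SSYTD(1,3)[OF F, of "(i,j)"] by (cases "(i,j) \<in> skew_cells") auto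
  then have "{j. j < la_row i \<and> F (i,j) \<le> m} = {..<la_row i}" by auto
  then show ?thesis by (simp add: fill_count_def)
qed

lemma fill_count_Suc_row: "F \<in> SSYT \<Longrightarrow> fill_count F t (Suc i) \<le> fill_count F t i"
proof -
  assume F: "F \<in> SSYT"
  have "{j. j < la_row (Suc i) \<and> F (Suc i,j) \<le> t} \<subseteq> {j. j < la_row i \<and> F (i,j) \<le> t}"
  proof clarify
    fix j assume j: "j < la_row (Suc i)" "F (Suc i,j) \<le> t"
    then show "j < la_row i \<and> F (i,j) \<le> t" using la_row_mono[of i] SSYT_col_weak[OF F j(1)] by simp
  qed
  then show ?thesis unfolding fill_count_def by (rule card_mono[rotated]) simp
qed

lemma fill_count_row_mono:
  assumes F: "F \<in> SSYT" and ii: "i \<le> i'"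
  shows "fill_count F t i' \<le> fill_count F t i"
  using ii
proof (induction i' rule: dec_induct)
  case (step k) then show ?case using fill_count_Suc_row[OF F, of t k] by simp
qed simp

lemma fill_count_le_Suc: "fill_count F t i \<le> fill_count F (Suc t) i"
  unfolding fill_count_def by (rule card_mono) auto

lemma fill_count_diag: "F \<in> SSYT \<Longrightarrow> fill_count F (Suc t) (Suc i) \<le> fill_count F t i"
proof -
  assume F: "F \<in> SSYT"
  have "{j. j < la_row (Suc i) \<and> F (Suc i,j) \<le> Suc t} \<subseteq> {j. j < la_row i \<and> F (i,j) \<le> t}"
  proof clarify
    fix j assume j: "j < la_row (Suc i)" "F (Suc i,j) \<le> Suc t"
    have "j < la_row i" using j la_row_mono[of i] by simp
    moreover have "F (i,j) \<le> t"
    proof (cases "(Suc i,j) \<in> skew_cells")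
      case True then show ?thesis using SSYT_col_strict[OF F True] j by simp
    next
      case False
      then have "j < mu_row (Suc i)" using j by (auto simp: skew_cells_iff)
      then have "j < mu_row i" using mu_row_mono[of i] by simp
      then show ?thesis using SSYTD(1)[OF F] by (simp add: skew_cells_iff)
    qed
    ultimately show "j < la_row i \<and> F (i,j) \<le> t" by simp
  qed
  then show ?thesis unfolding fill_count_def by (rule card_mono[rotated]) simp
qed

lemma fill_count_high: "F \<in> SSYT \<Longrightarrow> K + t \<le> i \<Longrightarrow> fill_count F t i = 0"
proof -
  assume F: "F \<in> SSYT" and i: "K + t \<le> i"
  have "{j. j < la_row i \<and> F (i,j) \<le> t} = {}"
  proof (rule ccontr)
    assume "{j. j < la_row i \<and> F (i,j) \<le> t} \<noteq> {}"
    then obtain j where j: "j < la_row i" "F (i,j) \<le> t" by auto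
    have "mu_row i = 0" using i mu_row_zero by simp
    then have "(i,j) \<in> skew_cells" using j by (simp add: skew_cells_iff)
    then have "i < K + F (i,j)" by (rule SSYT_row_bound[OF F])
    then show False using i j by simp
  qed
  then show ?thesis by (simp add: fill_count_def)
qed

lemma chain_of_tab_Chains: "F \<in> SSYT \<Longrightarrow> chain_of_tab F \<in> Chains"
proof -
  assume F: "F \<in> SSYT"
  have nth: "chain_of_tab F ! t = map (\<lambda>i. int (fill_count F t i)) [0..<K+t]" if "t \<le> m" for t
    using that by (simp add: chain_of_tab_def nth_append del: upt_Suc)
  show ?thesis
    unfolding Chains_iff
  proof (intro conjI allI impI)
    show "length (chain_of_tab F) = Suc m" by (simp add: chain_of_tab_def)
    show "chain_of_tab F ! 0 = pad K mu"
      using lenmu by (auto simp: nth pad_length pad_nth fill_count_0[OF F] mu_row_def intro!: nth_equalityI)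
    show "chain_of_tab F ! m = pad (K + m) la"
      using lenla by (auto simp: nth pad_length pad_nth fill_count_m[OF F] la_row_def intro!: nth_equalityI)
  next
    fix t assume t: "t \<le> m"
    show "chain_of_tab F ! t \<in> sigs (K + t)"
      unfolding sigs_def using t
      by (auto simp: nth sorted_wrt_iff_nth_less fill_count_row_mono[OF F])
  next
    fix t assume t: "t < m"
    show "interlace (chain_of_tab F ! t) (chain_of_tab F ! Suc t)"
      unfolding interlace_def using t
      by (auto simp: nth fill_count_le_Suc fill_count_diag[OF F] simp del: upt_Suc)
  qed
qed

lemma part_chain_of_tab: "F \<in> SSYT \<Longrightarrow> t \<le> m \<Longrightarrow> part (chain_of_tab F) t i = int (fill_count F t i)"
  by (auto simp: part_def chain_of_tab_def nth_append fill_count_high simp del: upt_Suc)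

lemma tab_of_chain_of_tab:
  assumes F: "F \<in> SSYT"
  shows "tab_of_chain (chain_of_tab F) = F"
proof
  fix x :: "nat \<times> nat"
  obtain i j where x: "x = (i,j)" by (cases x)
  show "tab_of_chain (chain_of_tab F) x = F x"
  proof (cases "(i,j) \<in> skew_cells")
    case True
    have "{t. t \<le> m \<and> part (chain_of_tab F) t i \<le> int j} = {..<F (i,j)}"
    proof -
      have e: "part (chain_of_tab F) t i \<le> int j \<longleftrightarrow> \<not> (F (i,j) \<le> t)" if "t \<le> m" for t
      proof -
        have "part (chain_of_tab F) t i \<le> int j \<longleftrightarrow> \<not> (j < fill_count F t i)" using part_chain_of_tab[OF F that] by auto
        also have "\<dots> \<longleftrightarrow> \<not> (F (i,j) \<le> t)" using fill_count_iff[OF F, of j i t] True by (simp add: skew_cells_iff)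
        finally show ?thesis .
      qed
      have "{t. t \<le> m \<and> part (chain_of_tab F) t i \<le> int j} = {t. t \<le> m \<and> \<not> (F (i,j) \<le> t)}"
        using e by auto
      also have "\<dots> = {..<F (i,j)}" using SSYTD(3)[OF F True] by auto
      finally show ?thesis .
    qed
    then show ?thesis using True x by (simp add: tab_of_chain_def)
  next
    case False
    then show ?thesis using x SSYTD(1)[OF F] by (simp add: tab_of_chain_def)
  qed
qed

lemma fill_count_tab_of_chain:
  assumes c: "c \<in> Chains" and t: "t \<le> m"
  shows "fill_count (tab_of_chain c) t i = nat (part c t i)"
proof -
  have "j < la_row i \<and> tab_of_chain c (i,j) \<le> t \<longleftrightarrow> j < nat (part c t i)" for j
  proof
    assume j: "j < la_row i \<and> tab_of_chain c (i,j) \<le> t"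
    show "j < nat (part c t i)"
    proof (cases "(i,j) \<in> skew_cells")
      case True
      then have "card (below_times c i j) \<le> t"
        using j by (simp add: tab_of_chain_def below_times_def)
      then have "t \<notin> below_times c i j"
        using below_times_mem[OF c] by auto
      then show ?thesis
        using t by (auto simp: below_times_def)
    next
      case False
      then have "j < mu_row i"
        using j by (auto simp: skew_cells_iff)
      moreover have "int (mu_row i) \<le> part c t i"
        using part_0[OF c, of i] part_mono[OF c, of 0 t i] t by simp
      ultimately show ?thesis by simp
    qed
  next
    assume j: "j < nat (part c t i)"
    have "part c t i \<le> int (la_row i)"
      using part_m[OF c, of i] part_mono[OF c, of t m i] t by simp
    then have jl: "j < la_row i"
      using j by simp
    show "j < la_row i \<and> tab_of_chain c (i,j) \<le> t"
    proof (cases "(i,j) \<in> skew_cells")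
      case True
      have "t \<notin> below_times c i j"
        using j by (auto simp: below_times_def)
      then have "card (below_times c i j) \<le> t"
        using below_times_mem[OF c] by (meson not_le)
      then show ?thesis
        using True jl by (simp add: tab_of_chain_def below_times_def)
    qed (use jl in \<open>simp add: tab_of_chain_def\<close>)
  qed
  then show ?thesis
    by (simp add: fill_count_def)
qed

lemma chain_of_tab_of_chain:
  assumes c: "c \<in> Chains"
  shows "chain_of_tab (tab_of_chain c) = c"
proof (rule nth_equalityI)
  show "length (chain_of_tab (tab_of_chain c)) = length c"
    using c by (simp add: chain_of_tab_def Chains_iff)
next
  fix t assume "t < length (chain_of_tab (tab_of_chain c))"
  then have t: "t \<le> m" by (simp add: chain_of_tab_def)
  show "chain_of_tab (tab_of_chain c) ! t = c ! t"
  proof (rule nth_equalityI)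
    show "length (chain_of_tab (tab_of_chain c) ! t) = length (c!t)"
      using t Chains_length[OF c t] by (simp add: chain_of_tab_def nth_append del: upt_Suc)
  next
    fix i assume "i < length (chain_of_tab (tab_of_chain c) ! t)"
    then have i: "i < K + t"
      using t by (simp add: chain_of_tab_def nth_append del: upt_Suc)
    have "chain_of_tab (tab_of_chain c) ! t ! i = int (fill_count (tab_of_chain c) t i)"
      using t i by (simp add: chain_of_tab_def nth_append del: upt_Suc)
    also have "\<dots> = part c t i"
      using fill_count_tab_of_chain[OF c t] part_nonneg[OF c t] by simp
    also have "\<dots> = c!t!i"
      using i by (simp add: part_def)
    finally show "chain_of_tab (tab_of_chain c) ! t ! i = c ! t ! i" .
  qed
qed

lemma card_Chains_SSYT: "card Chains = card SSYT"
  by (rule bij_betw_same_card[of tab_of_chain], rule bij_betw_byWitness[where f'=chain_of_tab])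
     (auto simp: tab_of_chain_of_tab chain_of_tab_of_chain tab_of_chain_SSYT chain_of_tab_Chains intro!: imageI)

(* Counting the fillings. Those with distinct entries are pairs of a standard tableau and its set
   of values; the others have a coincidence between two cells. *)
lemma finite_skew_cells: "finite skew_cells"
  by (simp add: skew_cells_def finite_cells)

lemma card_skew_cells: "card skew_cells = size_yd la - size_yd mu"
proof -
  have "cells mu \<subseteq> cells la" using sub by (auto simp: cells_def yd_subset_def)
  then show ?thesis
    by (simp add: skew_cells_def card_Diff_subset finite_cells card_cells size_yd_def)
qed

lemma SYT_skew_cells: "SYT la mu = {Q. bij_betw Q skew_cells {1..card skew_cells} \<and> (\<forall>x. x \<notin> skew_cells \<longrightarrow> Q x = 0) \<and>
         (\<forall>i j. (i,j) \<in> skew_cells \<and> (i, Suc j) \<in> skew_cells \<longrightarrow> Q (i,j) < Q (i, Suc j)) \<and>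
         (\<forall>i j. (i,j) \<in> skew_cells \<and> (Suc i, j) \<in> skew_cells \<longrightarrow> Q (i,j) < Q (Suc i, j))}"
  by (simp add: SYT_def skew_cells_def Let_def)

definition SSYT_inj :: "(nat \<times> nat \<Rightarrow> nat) set" where
  "SSYT_inj = {F \<in> SSYT. inj_on F skew_cells}"

definition value_sets :: "nat set set" where
  "value_sets = {S. S \<subseteq> {1..m} \<and> card S = card skew_cells}"

definition spread :: "(nat \<times> nat \<Rightarrow> nat) \<times> nat set \<Rightarrow> nat \<times> nat \<Rightarrow> nat" where
  "spread = (\<lambda>(Q,S). (\<lambda>x. if x \<in> skew_cells then nth_elem S (Q x) else 0))"

definition std_rank :: "(nat \<times> nat \<Rightarrow> nat) \<Rightarrow> nat \<times> nat \<Rightarrow> nat" where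
  "std_rank F = (\<lambda>x. if x \<in> skew_cells then rank_in (F ` skew_cells) (F x) else 0)"

definition standardize :: "(nat \<times> nat \<Rightarrow> nat) \<Rightarrow> (nat \<times> nat \<Rightarrow> nat) \<times> nat set" where
  "standardize F = (std_rank F, F ` skew_cells)"

lemma SSYT_subset_funs: "SSYT \<subseteq> supported_funs skew_cells {1..m}"
  by (auto simp: SSYT_def supported_funs_def)

lemma finite_SSYT: "finite SSYT"
  by (rule finite_subset[OF SSYT_subset_funs finite_supported_funs]) (auto simp: finite_skew_cells)

lemma finite_SYT: "finite (SYT la mu)"
proof -
  have "SYT la mu \<subseteq> supported_funs skew_cells {1..card skew_cells}"
    by (auto simp: SYT_skew_cells bij_betw_def supported_funs_def)
  then show ?thesis
    by (rule finite_subset[OF _ finite_supported_funs]) (auto simp: finite_skew_cells)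
qed

lemma finite_value_sets: "finite value_sets"
  by (rule finite_subset[of _ "Pow {1..m}"]) (auto simp: value_sets_def)

lemma card_value_sets: "card value_sets = m choose card skew_cells"
  using n_subsets[of "{1..m}" "card skew_cells"] by (simp add: value_sets_def)

lemma spread_SSYT_inj:
  assumes Q: "Q \<in> SYT la mu" and S: "S \<in> value_sets"
  shows "spread (Q,S) \<in> SSYT_inj"
proof -
  have Tb: "bij_betw Q skew_cells {1..card skew_cells}" and T0: "\<And>x. x \<notin> skew_cells \<Longrightarrow> Q x = 0"
    and Tr: "\<And>i j. (i,j) \<in> skew_cells \<Longrightarrow> (i, Suc j) \<in> skew_cells \<Longrightarrow> Q (i,j) < Q (i, Suc j)"
    and Tc: "\<And>i j. (i,j) \<in> skew_cells \<Longrightarrow> (Suc i, j) \<in> skew_cells \<Longrightarrow> Q (i,j) < Q (Suc i, j)"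
    using Q by (auto simp: SYT_skew_cells)
  have Sf: "finite S" "card S = card skew_cells" and Sm: "S \<subseteq> {1..m}" using S finite_subset[of S "{1..m}"] by (auto simp: value_sets_def)
  note E = nth_elem_props[OF Sf]
  have Tv: "Q x \<in> {1..card skew_cells}" if "x \<in> skew_cells" for x using Tb that by (auto simp: bij_betw_def)
  have g: "spread (Q,S) x = (if x \<in> skew_cells then nth_elem S (Q x) else 0)" for x by (simp add: spread_def)
  show ?thesis
    unfolding SSYT_inj_def SSYT_def
  proof (intro CollectI conjI allI impI ballI)
    fix x assume "x \<notin> skew_cells" then show "spread (Q,S) x = 0" by (simp add: g)
  next
    fix x assume x: "x \<in> skew_cells"
    then have "nth_elem S (Q x) \<in> {1..m}" using E(1)[OF Tv[OF x]] Sm by auto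
    then show "1 \<le> spread (Q,S) x" "spread (Q,S) x \<le> m" using x by (auto simp: g)
  next
    fix i j assume h: "(i,j) \<in> skew_cells \<and> (i,Suc j) \<in> skew_cells"
    then show "spread (Q,S) (i,j) \<le> spread (Q,S) (i,Suc j)"
      using E(2)[OF Tv Tv Tr] by (auto simp: g intro: less_imp_le)
  next
    fix i j assume h: "(i,j) \<in> skew_cells \<and> (Suc i,j) \<in> skew_cells"
    then show "spread (Q,S) (i,j) < spread (Q,S) (Suc i,j)"
      using E(2)[OF Tv Tv Tc] by (auto simp: g)
  next
    show "inj_on (spread (Q,S)) skew_cells"
    proof (rule inj_onI)
      fix x y assume xy: "x \<in> skew_cells" "y \<in> skew_cells" "spread (Q,S) x = spread (Q,S) y"
      then have "nth_elem S (Q x) = nth_elem S (Q y)" by (simp add: g)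
      then have "Q x = Q y" by (rule inj_onD[OF E(4) _ Tv[OF xy(1)] Tv[OF xy(2)]])
      then show "x = y" using Tb xy by (auto simp: bij_betw_def dest: inj_onD)
    qed
  qed
qed

lemma inj_spread: "inj_on spread (SYT la mu \<times> value_sets)"
proof (rule inj_onI, clarify)
  fix Q S Q' S' assume Q: "Q \<in> SYT la mu" and S: "S \<in> value_sets" and Q': "Q' \<in> SYT la mu" and S': "S' \<in> value_sets"
    and e: "spread (Q,S) = spread (Q',S')"
  have Tb: "bij_betw Q skew_cells {1..card skew_cells}" "\<And>x. x \<notin> skew_cells \<Longrightarrow> Q x = 0" using Q by (auto simp: SYT_skew_cells)
  have Tb': "bij_betw Q' skew_cells {1..card skew_cells}" "\<And>x. x \<notin> skew_cells \<Longrightarrow> Q' x = 0" using Q' by (auto simp: SYT_skew_cells)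
  have Sf: "finite S" "card S = card skew_cells" using S finite_subset[of S "{1..m}"] by (auto simp: value_sets_def)
  have Sf': "finite S'" "card S' = card skew_cells" using S' finite_subset[of S' "{1..m}"] by (auto simp: value_sets_def)
  have img: "spread (Q,S) ` skew_cells = S"
  proof -
    have "spread (Q,S) ` skew_cells = nth_elem S ` Q ` skew_cells" by (auto simp: spread_def image_iff)
    also have "Q ` skew_cells = {1..card skew_cells}" using Tb by (simp add: bij_betw_def)
    finally show ?thesis using nth_elem_props(3)[OF Sf] by simp
  qed
  have img': "spread (Q',S') ` skew_cells = S'"
  proof -
    have "spread (Q',S') ` skew_cells = nth_elem S' ` Q' ` skew_cells" by (auto simp: spread_def image_iff)
    also have "Q' ` skew_cells = {1..card skew_cells}" using Tb' by (simp add: bij_betw_def)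
    finally show ?thesis using nth_elem_props(3)[OF Sf'] by simp
  qed
  have same_set: "S = S'" using img img' e by simp
  have "Q x = Q' x" for x
  proof (cases "x \<in> skew_cells")
    case True
    have "spread (Q,S) x = spread (Q',S') x" using e by simp
    then have "nth_elem S (Q x) = nth_elem S' (Q' x)" using True by (simp add: spread_def)
    then have "nth_elem S (Q x) = nth_elem S (Q' x)" using same_set by simp
    moreover have "Q x \<in> {1..card skew_cells}" "Q' x \<in> {1..card skew_cells}" using Tb Tb' True by (auto simp: bij_betw_def)
    ultimately show ?thesis using nth_elem_props(4)[OF Sf] by (auto dest: inj_onD)
  next
    case False then show ?thesis using Tb Tb' by simp
  qed
  then show "Q = Q' \<and> S = S'" using same_set by auto
qed

lemma standardize_maps:
  assumes F: "F \<in> SSYT_inj"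
  shows "standardize F \<in> SYT la mu \<times> value_sets"
proof -
  have FS: "F \<in> SSYT" and Fi: "inj_on F skew_cells" using F by (auto simp: SSYT_inj_def)
  define S where "S = F ` skew_cells"
  have Sf: "finite S" using finite_skew_cells by (simp add: S_def)
  have cS: "card S = card skew_cells" using Fi by (simp add: S_def card_image)
  have Sm: "S \<subseteq> {1..m}" using SSYTD(2,3)[OF FS] by (auto simp: S_def)
  have D: "S \<in> value_sets" using cS Sm by (simp add: value_sets_def)
  have rkC: "std_rank F x = rank_in S (F x)" if "x \<in> skew_cells" for x using that by (simp add: std_rank_def S_def)
  have FinS: "F x \<in> S" if "x \<in> skew_cells" for x using that by (simp add: S_def)
  have lt: "std_rank F x < std_rank F y" if "x \<in> skew_cells" "y \<in> skew_cells" "F x < F y" for x y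
    using rank_in_strict[OF Sf FinS FinS] that by (simp add: rkC)
  have rng: "std_rank F x \<in> {1..card skew_cells}" if "x \<in> skew_cells" for x
    using rank_in_range[OF Sf FinS[OF that]] cS that by (simp add: rkC)
  have inj: "inj_on (std_rank F) skew_cells"
  proof (rule inj_onI)
    fix x y assume xy: "x \<in> skew_cells" "y \<in> skew_cells" "std_rank F x = std_rank F y"
    then have "F x = F y" using rank_in_inj[OF Sf FinS FinS] by (simp add: rkC)
    then show "x = y" using Fi xy by (auto dest: inj_onD)
  qed
  have bij: "bij_betw (std_rank F) skew_cells {1..card skew_cells}"
  proof -
    have sub: "std_rank F ` skew_cells \<subseteq> {1..card skew_cells}" using rng by auto
    have "card (std_rank F ` skew_cells) = card {1..card skew_cells}" using inj by (simp add: card_image)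
    then have "std_rank F ` skew_cells = {1..card skew_cells}" by (rule card_subset_eq[OF _ sub, rotated]) simp
    then show ?thesis using inj by (simp add: bij_betw_def)
  qed
  have std: "std_rank F \<in> SYT la mu"
    unfolding SYT_skew_cells
  proof (intro CollectI conjI allI impI)
    show "bij_betw (std_rank F) skew_cells {1..card skew_cells}" by (rule bij)
  next
    fix x assume "x \<notin> skew_cells" then show "std_rank F x = 0" by (simp add: std_rank_def)
  next
    fix i j assume h: "(i,j) \<in> skew_cells \<and> (i, Suc j) \<in> skew_cells"
    have "F (i,j) \<le> F (i,Suc j)" using SSYTD(4)[OF FS] h by blast
    moreover have "F (i,j) \<noteq> F (i,Suc j)" using Fi h by (auto dest: inj_onD)
    ultimately show "std_rank F (i,j) < std_rank F (i,Suc j)" using lt h by simp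
  next
    fix i j assume h: "(i,j) \<in> skew_cells \<and> (Suc i, j) \<in> skew_cells"
    have "F (i,j) < F (Suc i,j)" using SSYTD(5)[OF FS] h by blast
    then show "std_rank F (i,j) < std_rank F (Suc i,j)" using lt h by simp
  qed
  show ?thesis using std D by (simp add: standardize_def S_def)
qed

lemma inj_standardize: "inj_on standardize SSYT_inj"
proof (rule inj_onI)
  fix F F' assume F: "F \<in> SSYT_inj" and F': "F' \<in> SSYT_inj" and e: "standardize F = standardize F'"
  have S: "F ` skew_cells = F' ` skew_cells" and r: "std_rank F = std_rank F'" using e by (auto simp: standardize_def)
  have Sf: "finite (F ` skew_cells)" using finite_skew_cells by simp
  show "F = F'"
  proof
    fix x
    show "F x = F' x"
    proof (cases "x \<in> skew_cells")
      case True
      have "rank_in (F ` skew_cells) (F x) = rank_in (F ` skew_cells) (F' x)" using fun_cong[OF r, of x] True S by (simp add: std_rank_def)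
      moreover have "F' x \<in> F ` skew_cells" using S True by simp
      ultimately show ?thesis using rank_in_inj[OF Sf] True by blast
    next
      case False
      have "F \<in> SSYT" "F' \<in> SSYT" using F F' by (auto simp: SSYT_inj_def)
      then show ?thesis using SSYTD(1)[OF \<open>F \<in> SSYT\<close> False] SSYTD(1)[OF \<open>F' \<in> SSYT\<close> False] by simp
    qed
  qed
qed

lemma card_SSYT_inj: "card SSYT_inj = dim_skew la mu * (m choose card skew_cells)"
proof -
  have fSSi: "finite SSYT_inj" using finite_SSYT by (simp add: SSYT_inj_def)
  have fP: "finite (SYT la mu \<times> value_sets)" using finite_SYT finite_value_sets by simp
  have "card (SYT la mu \<times> value_sets) \<le> card SSYT_inj"
    by (rule card_inj_on_le[OF inj_spread _ fSSi]) (auto intro!: spread_SSYT_inj)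
  moreover have "card SSYT_inj \<le> card (SYT la mu \<times> value_sets)"
    by (rule card_inj_on_le[OF inj_standardize _ fP]) (rule image_subsetI, rule standardize_maps)
  ultimately show ?thesis by (simp add: card_cartesian_product dim_skew_def card_value_sets)
qed

(* Fillings with a repeated entry: at most n^2 m^(n-1), choosing the pair of cells and all
   entries but one. *)
lemma card_SSYT_non_inj: "card (SSYT - SSYT_inj) \<le> card skew_cells ^ 2 * m ^ (card skew_cells - 1)"
proof -
  have "SSYT - SSYT_inj \<subseteq> {F \<in> supported_funs skew_cells {1..m}. \<not> inj_on F skew_cells}"
    using SSYT_subset_funs by (auto simp: SSYT_inj_def)
  then have "card (SSYT - SSYT_inj) \<le> card {F \<in> supported_funs skew_cells {1..m}. \<not> inj_on F skew_cells}"
    by (rule card_mono[rotated]) (simp add: finite_supported_funs finite_skew_cells)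
  also have "\<dots> \<le> card skew_cells ^ 2 * card {1..m} ^ (card skew_cells - 1)"
    by (rule card_non_injective_funs) (simp_all add: finite_skew_cells)
  finally show ?thesis
    by simp
qed

theorem card_Chains_bounds:
  "dim_skew la mu * (m choose card skew_cells) \<le> card Chains \<and>
   card Chains \<le> dim_skew la mu * (m choose card skew_cells) + card skew_cells ^ 2 * m ^ (card skew_cells - 1)"
proof -
  have "SSYT_inj \<subseteq> SSYT" by (auto simp: SSYT_inj_def)
  then have "card SSYT = card SSYT_inj + card (SSYT - SSYT_inj)"
    using finite_SSYT by (metis card_Diff_subset card_mono diff_add_inverse le_add_diff_inverse finite_subset)
  then show ?thesis using card_Chains_SSYT card_SSYT_inj card_SSYT_non_inj by simp
qed

end

lemma DimKN_bounds:
  assumes "young la" "young mu" "yd_subset mu la" "length mu \<le> K" "length la \<le> K + m"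
  shows "dim_skew la mu * (m choose (size_yd la - size_yd mu)) \<le> DimKN K (K+m) (pad K mu) (pad (K+m) la)"
    and "DimKN K (K+m) (pad K mu) (pad (K+m) la) \<le> dim_skew la mu * (m choose (size_yd la - size_yd mu))
           + (size_yd la - size_yd mu)^2 * m^(size_yd la - size_yd mu - 1)"
proof -
  interpret skew la mu K m using assms by unfold_locales
  have count_eq: "DimKN K (K+m) (pad K mu) (pad (K+m) la) = card Chains" by (simp add: Chains_def DimKN_chains)
  show "dim_skew la mu * (m choose (size_yd la - size_yd mu)) \<le> DimKN K (K+m) (pad K mu) (pad (K+m) la)"
    using card_Chains_bounds card_skew_cells count_eq by simp
  show "DimKN K (K+m) (pad K mu) (pad (K+m) la) \<le> dim_skew la mu * (m choose (size_yd la - size_yd mu))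
           + (size_yd la - size_yd mu)^2 * m^(size_yd la - size_yd mu - 1)"
    using card_Chains_bounds card_skew_cells count_eq by simp
qed

lemma sum_list_take_Suc: "i < length l \<Longrightarrow> sum_list (take (Suc i) l) = sum_list (take i l) + (l!i :: nat)"
  by (simp add: take_Suc_conv_app_nth)

lemma sum_list_take_mono:
  assumes "i \<le> i'"
  shows "sum_list (take i l) \<le> sum_list (take i' (l::nat list))"
  using assms
proof (induction i' rule: dec_induct)
  case (step k) then show ?case by (cases "k < length l") (auto simp: take_Suc_conv_app_nth take_all)
qed simp

definition row_reading :: "nat list \<Rightarrow> nat \<times> nat \<Rightarrow> nat" where
  "row_reading la = (\<lambda>(i,j). if (i,j) \<in> cells la then sum_list (take i la) + j + 1 else 0)"

lemma row_reading_props: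
  assumes ij: "(i,j) \<in> cells la"
  shows "row_reading la (i,j) = sum_list (take i la) + j + 1"
    and "row_reading la (i,j) \<in> {1..sum_list la}"
    and "\<And>i' j'. (i',j') \<in> cells la \<Longrightarrow> i < i' \<Longrightarrow> row_reading la (i,j) < row_reading la (i',j')"
proof -
  show val: "row_reading la (i,j) = sum_list (take i la) + j + 1"
    using ij by (simp add: row_reading_def)
  have le: "row_reading la (i,j) \<le> sum_list (take (Suc i) la)"
    using ij by (simp add: val cells_def sum_list_take_Suc)
  also have "\<dots> \<le> sum_list la"
    using sum_list_take_mono[of "Suc i" "length la" la] ij by (simp add: cells_def)
  finally show "row_reading la (i,j) \<in> {1..sum_list la}"
    by (simp add: val)
  fix i' j' assume ij': "(i',j') \<in> cells la" and less: "i < i'"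
  note le
  also have "sum_list (take (Suc i) la) \<le> sum_list (take i' la)"
    using less by (intro sum_list_take_mono) simp
  also have "\<dots> < row_reading la (i',j')"
    using ij' by (simp add: row_reading_def)
  finally show "row_reading la (i,j) < row_reading la (i',j')" .
qed

lemma bij_row_reading: "bij_betw (row_reading la) (cells la) {1..card (cells la)}"
proof -
  have inj: "inj_on (row_reading la) (cells la)"
  proof (rule inj_onI, clarify)
    fix i j i' j' assume h: "(i,j) \<in> cells la" "(i',j') \<in> cells la" "row_reading la (i,j) = row_reading la (i',j')"
    have "i = i'"
      using row_reading_props(3)[OF h(1,2)] row_reading_props(3)[OF h(2,1)] h(3) by (metis less_irrefl linorder_neqE_nat)
    then show "i = i' \<and> j = j'"
      using h by (simp add: row_reading_props(1))
  qed
  moreover have "row_reading la ` cells la \<subseteq> {1..card (cells la)}"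
    using row_reading_props(2) by (auto simp: card_cells)
  ultimately show ?thesis
    by (simp add: bij_betw_def card_image card_subset_eq)
qed

(* Every Young diagram has a standard tableau, namely its row reading. *)
lemma dim_yd_pos:
  assumes y: "young la"
  shows "0 < dim_yd la"
proof -
  interpret s: skew la "[]" 0 "length la"
    by unfold_locales (use y in \<open>auto simp: young_def yd_subset_def\<close>)
  have cells: "s.skew_cells = cells la"
    by (simp add: s.skew_cells_def cells_def)
  have "row_reading la \<in> SYT la []"
    unfolding s.SYT_skew_cells cells
  proof (intro CollectI conjI allI impI)
    show "bij_betw (row_reading la) (cells la) {1..card (cells la)}"
      by (rule bij_row_reading)
  next
    fix x assume "x \<notin> cells la"
    then show "row_reading la x = 0"
      by (auto simp: row_reading_def split: prod.splits)
  next
    fix i j assume "(i,j) \<in> cells la \<and> (Suc i, j) \<in> cells la"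
    then show "row_reading la (i,j) < row_reading la (Suc i,j)"
      using row_reading_props(3) by blast
  qed (simp add: row_reading_props(1))
  then show ?thesis
    using s.finite_SYT by (auto simp: dim_yd_def dim_skew_def card_gt_0_iff)
qed

(* Asymptotics of chain counts and the proof of the theorem. *)

lemma binomial_asymptotics:
  fixes M :: "nat \<Rightarrow> nat"
  assumes M: "filterlim (\<lambda>k. real (M k)) at_top sequentially"
  shows "(\<lambda>k. real (M k choose n) / real (M k) ^ n) \<longlonglongrightarrow> 1 / fact n"
proof -
  have "\<forall>Z. eventually (\<lambda>k. Z < real (M k)) sequentially" using M by (simp add: filterlim_at_top_dense)
  then have ev: "eventually (\<lambda>k. 0 < real (M k)) sequentially" by blast
  have inf: "filterlim (\<lambda>k. real (M k)) at_infinity sequentially"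
    using M by (rule filterlim_at_top_imp_at_infinity)
  have "(\<lambda>k. (\<Prod>i<n. 1 - real i / real (M k)) / fact n) \<longlonglongrightarrow> (\<Prod>i<n. 1 - 0) / fact n"
    by (intro tendsto_intros tendsto_divide_0[OF _ inf]) auto
  moreover have "eventually (\<lambda>k. (\<Prod>i<n. 1 - real i / real (M k)) / fact n = real (M k choose n) / real (M k) ^ n) sequentially"
    using ev
  proof eventually_elim
    case (elim k)
    have "real (M k choose n) = (\<Prod>i<n. real (M k) - real i) / fact n"
      by (simp add: binomial_gbinomial gbinomial_prod_rev atLeast0LessThan)
    moreover have "(\<Prod>i<n. 1 - real i / real (M k)) = (\<Prod>i<n. real (M k) - real i) / real (M k) ^ n"
    proof -
      have "(\<Prod>i<n. 1 - real i / real (M k)) = (\<Prod>i<n. (real (M k) - real i) / real (M k))"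
        by (rule prod.cong) (use elim in \<open>auto simp: field_simps\<close>)
      also have "\<dots> = (\<Prod>i<n. real (M k) - real i) / (\<Prod>i<n. real (M k))" by (rule prod_dividef)
      finally show ?thesis by simp
    qed
    ultimately show ?case by simp
  qed
  ultimately show ?thesis by (simp add: tendsto_cong)
qed

lemma count_asymptotics:
  fixes X M :: "nat \<Rightarrow> nat" and d n :: nat
  assumes M: "filterlim (\<lambda>k. real (M k)) at_top sequentially"
    and lo: "eventually (\<lambda>k. d * (M k choose n) \<le> X k) sequentially"
    and hi: "eventually (\<lambda>k. X k \<le> d * (M k choose n) + n^2 * M k ^ (n - 1)) sequentially"
  shows "(\<lambda>k. real (X k) / real (M k) ^ n) \<longlonglongrightarrow> real d / fact n"
proof -
  have "\<forall>Z. eventually (\<lambda>k. Z < real (M k)) sequentially" using M by (simp add: filterlim_at_top_dense)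
  then have ev: "eventually (\<lambda>k. 0 < real (M k)) sequentially" by blast
  have inf: "filterlim (\<lambda>k. real (M k)) at_infinity sequentially"
    using M by (rule filterlim_at_top_imp_at_infinity)
  have main_term: "(\<lambda>k. real d * (real (M k choose n) / real (M k) ^ n)) \<longlonglongrightarrow> real d * (1 / fact n)"
    by (intro tendsto_intros binomial_asymptotics[OF M])
  have error_term: "(\<lambda>k. real (n^2 * M k ^ (n - 1)) / real (M k) ^ n) \<longlonglongrightarrow> 0"
  proof (cases n)
    case 0 then show ?thesis by simp
  next
    case (Suc n')
    have "(\<lambda>k. real (n^2) / real (M k)) \<longlonglongrightarrow> 0"
      by (rule tendsto_divide_0[OF tendsto_const inf])
    moreover have "eventually (\<lambda>k. real (n^2) / real (M k) = real (n^2 * M k ^ (n - 1)) / real (M k) ^ n) sequentially"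
      using ev by eventually_elim (simp add: Suc field_simps)
    ultimately show ?thesis by (simp add: tendsto_cong)
  qed
  show ?thesis
  proof (rule tendsto_sandwich[of "\<lambda>k. real d * (real (M k choose n) / real (M k) ^ n)" _ _
        "\<lambda>k. real d * (real (M k choose n) / real (M k) ^ n) + real (n^2 * M k ^ (n - 1)) / real (M k) ^ n"])
    show "eventually (\<lambda>k. real d * (real (M k choose n) / real (M k) ^ n) \<le> real (X k) / real (M k) ^ n) sequentially"
      using lo ev
    proof eventually_elim
      case (elim k)
      have "real (d * (M k choose n)) \<le> real (X k)" using elim by linarith
      then show ?case using elim by (simp add: divide_right_mono)
    qed
    show "eventually (\<lambda>k. real (X k) / real (M k) ^ n \<le> real d * (real (M k choose n) / real (M k) ^ n) + real (n^2 * M k ^ (n - 1)) / real (M k) ^ n) sequentially"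
      using hi ev
    proof eventually_elim
      case (elim k)
      have "real (X k) \<le> real (d * (M k choose n)) + real (n^2 * M k ^ (n - 1))"
        using elim by (simp only: of_nat_add[symmetric] of_nat_le_iff)
      then have "real (X k) / real (M k) ^ n \<le> (real (d * (M k choose n)) + real (n^2 * M k ^ (n - 1))) / real (M k) ^ n"
        using elim by (simp add: divide_right_mono)
      then show ?case by (simp add: add_divide_distrib)
    qed
    show "(\<lambda>k. real d * (real (M k choose n) / real (M k) ^ n)) \<longlonglongrightarrow> real d / fact n"
      using main_term by simp
    show "(\<lambda>k. real d * (real (M k choose n) / real (M k) ^ n) + real (n^2 * M k ^ (n - 1)) / real (M k) ^ n) \<longlonglongrightarrow> real d / fact n"
      using tendsto_add[OF main_term error_term] by simp
  qed
qed

lemma DimKN_asymptotics: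
  fixes K L :: "nat \<Rightarrow> nat"
  assumes young: "young la" "young mu" and sub: "yd_subset mu la"
    and gap: "filterlim (\<lambda>k. real (L k - K k)) at_top sequentially"
    and len: "eventually (\<lambda>k. length mu \<le> K k \<and> length la \<le> L k) sequentially"
  shows "(\<lambda>k. real (DimKN (K k) (L k) (pad (K k) mu) (pad (L k) la)) /
              real (L k - K k) ^ (size_yd la - size_yd mu))
         \<longlonglongrightarrow> real (dim_skew la mu) / fact (size_yd la - size_yd mu)"
proof (rule count_asymptotics[OF gap])
  have "eventually (\<lambda>k. 0 < real (L k - K k)) sequentially"
    using gap unfolding filterlim_at_top_dense by blast
  then have "eventually (\<lambda>k. length mu \<le> K k \<and> length la \<le> K k + (L k - K k) \<and>
      K k + (L k - K k) = L k) sequentially"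
    using len by eventually_elim auto
  then show "eventually (\<lambda>k. dim_skew la mu * ((L k - K k) choose (size_yd la - size_yd mu))
      \<le> DimKN (K k) (L k) (pad (K k) mu) (pad (L k) la)) sequentially"
    and "eventually (\<lambda>k. DimKN (K k) (L k) (pad (K k) mu) (pad (L k) la)
      \<le> dim_skew la mu * ((L k - K k) choose (size_yd la - size_yd mu))
        + (size_yd la - size_yd mu)^2 * (L k - K k) ^ (size_yd la - size_yd mu - 1)) sequentially"
    by (eventually_elim, metis DimKN_bounds[OF young sub])+
qed

lemma DimN_asymptotics:
  fixes N :: "nat \<Rightarrow> nat"
  assumes young: "young la" and N: "filterlim N at_top sequentially"
  shows "(\<lambda>k. DimN (N k) (pad (N k) la) / real (N k) ^ size_yd la)
         \<longlonglongrightarrow> real (dim_yd la) / fact (size_yd la)"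
proof -
  have pad0: "pad 0 [] = []"
    by (simp add: pad_def)
  have len: "eventually (\<lambda>k. length la \<le> N k) sequentially"
    using N unfolding filterlim_at_top by blast
  then have counts: "eventually (\<lambda>k. real (DimKN 0 (N k) (pad 0 []) (pad (N k) la)) /
      real (N k - 0) ^ (size_yd la - size_yd []) = DimN (N k) (pad (N k) la) / real (N k) ^ size_yd la)
      sequentially"
    by eventually_elim (simp add: DimN_eq_DimKN[OF pad_in_sigs[OF young]] pad0 size_yd_def)
  have "(\<lambda>k. real (DimKN 0 (N k) (pad 0 []) (pad (N k) la)) / real (N k - 0) ^ (size_yd la - size_yd []))
      \<longlonglongrightarrow> real (dim_skew la []) / fact (size_yd la - size_yd [])"
    by (rule DimKN_asymptotics)
       (use young len filterlim_compose[OF filterlim_real_sequentially N] in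
          \<open>auto simp: young_def yd_subset_def\<close>)
  then show ?thesis
    using counts by (simp add: dim_yd_def size_yd_def Lim_transform_eventually)
qed
lemma level_ratio_limits:
  fixes N N' :: "nat \<Rightarrow> nat" and r r' :: real
  assumes r: "0 < r" "r < r'" and N: "filterlim N at_top sequentially"
    and less: "\<And>k. N k < N' k"
    and ratio: "(\<lambda>k. real (N' k) / real (N k)) \<longlonglongrightarrow> r' / r"
  shows "(\<lambda>k. real (N k) / real (N' k)) \<longlonglongrightarrow> r / r'"
    and "(\<lambda>k. real (N' k - N k) / real (N' k)) \<longlonglongrightarrow> 1 - r / r'"
    and "filterlim (\<lambda>k. real (N' k - N k)) at_top sequentially"
proof -
  have pos: "eventually (\<lambda>k. 0 < N k) sequentially"
    using N[unfolded filterlim_at_top, rule_format, of 1] by (rule eventually_mono) simp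
  have diff: "real (N' k - N k) = real (N' k) - real (N k)" for k
    using less[of k] by (simp add: of_nat_diff)
  have "(\<lambda>k. 1 / (real (N' k) / real (N k))) \<longlonglongrightarrow> 1 / (r' / r)"
    by (rule tendsto_divide[OF tendsto_const ratio]) (use r in auto)
  then show inv: "(\<lambda>k. real (N k) / real (N' k)) \<longlonglongrightarrow> r / r'"
    by simp
  have "(\<lambda>k. 1 - real (N k) / real (N' k)) \<longlonglongrightarrow> 1 - r / r'"
    by (intro tendsto_intros inv)
  moreover have "1 - real (N k) / real (N' k) = real (N' k - N k) / real (N' k)" for k
    using less[of k] by (simp add: diff field_simps)
  ultimately show "(\<lambda>k. real (N' k - N k) / real (N' k)) \<longlonglongrightarrow> 1 - r / r'"
    by simp
  have "(\<lambda>k. real (N' k) / real (N k) - 1) \<longlonglongrightarrow> r' / r - 1"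
    by (intro tendsto_intros ratio)
  then have "filterlim (\<lambda>k. (real (N' k) / real (N k) - 1) * real (N k)) at_top sequentially"
    by (rule filterlim_tendsto_pos_mult_at_top)
       (use r filterlim_compose[OF filterlim_real_sequentially N] in auto)
  moreover have "eventually (\<lambda>k. (real (N' k) / real (N k) - 1) * real (N k) \<le> real (N' k - N k)) sequentially"
    using pos by eventually_elim (simp add: diff field_simps)
  ultimately show "filterlim (\<lambda>k. real (N' k - N k)) at_top sequentially"
    by (rule filterlim_at_top_mono)
qed

lemma rescaled_quotient:
  fixes A B C x y z :: real
  assumes "0 < x" "0 < y" "0 < z"
  shows "A / x ^ a * (B / z ^ n) / (C / y ^ (a + n)) * ((x / y) ^ a * (z / y) ^ n) = A * B / C"
proof (cases "C = 0")
  case False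
  then show ?thesis using assms by (simp add: field_simps power_add power_divide)
qed simp

lemma quotient_limit_rescaled:
  fixes A B C x y z :: "nat \<Rightarrow> real"
  assumes A: "(\<lambda>k. A k / x k ^ a) \<longlonglongrightarrow> \<alpha>" and B: "(\<lambda>k. B k / z k ^ n) \<longlonglongrightarrow> \<beta>"
    and C: "(\<lambda>k. C k / y k ^ (a + n)) \<longlonglongrightarrow> \<gamma>" "\<gamma> \<noteq> 0"
    and xy: "(\<lambda>k. x k / y k) \<longlonglongrightarrow> \<rho>" and zy: "(\<lambda>k. z k / y k) \<longlonglongrightarrow> \<sigma>"
    and pos: "eventually (\<lambda>k. 0 < x k \<and> 0 < y k \<and> 0 < z k) sequentially"
  shows "(\<lambda>k. A k * B k / C k) \<longlonglongrightarrow> \<alpha> * \<beta> / \<gamma> * (\<rho> ^ a * \<sigma> ^ n)"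
proof (rule Lim_transform_eventually)
  show "(\<lambda>k. A k / x k ^ a * (B k / z k ^ n) / (C k / y k ^ (a + n)) * ((x k / y k) ^ a * (z k / y k) ^ n))
      \<longlonglongrightarrow> \<alpha> * \<beta> / \<gamma> * (\<rho> ^ a * \<sigma> ^ n)"
    by (intro tendsto_mult tendsto_divide tendsto_power A B C xy zy)
  show "eventually (\<lambda>k. A k / x k ^ a * (B k / z k ^ n) / (C k / y k ^ (a + n)) *
      ((x k / y k) ^ a * (z k / y k) ^ n) = A k * B k / C k) sequentially"
    using pos by eventually_elim (rule rescaled_quotient, auto)
qed

lemma YB_link_eq_limit:
  assumes "0 < r" "r < r'" "young la" "yd_subset mu la"
  shows "YB_link r' r la mu =
    real (dim_yd mu) / fact (size_yd mu) * (real (dim_skew la mu) / fact (size_yd la - size_yd mu)) /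
      (real (dim_yd la) / fact (size_yd la)) *
    ((r / r') ^ size_yd mu * (1 - r / r') ^ (size_yd la - size_yd mu))"
proof -
  have "real (size_yd la choose size_yd mu) =
      fact (size_yd la) / (fact (size_yd mu) * fact (size_yd la - size_yd mu))"
    using binomial_fact[OF size_yd_mono[OF assms(4)]] by simp
  moreover have "real (dim_yd la) \<noteq> 0"
    using dim_yd_pos[OF assms(3)] by simp
  ultimately show ?thesis
    using assms by (simp add: YB_link_def field_simps)
qed

theorem theorem7:
  fixes r r' :: real and la mu :: "nat list" and N N' :: "nat \<Rightarrow> nat"
  assumes "0 < r" and "r < r'"
    and "young la" and "young mu" and "yd_subset mu la"
    and "filterlim N at_top sequentially"
    and "\<And>k. N k < N' k"
    and "(\<lambda>k. real (N' k) / real (N k)) \<longlonglongrightarrow> r' / r"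
  shows "(\<lambda>k. GT_link (N' k) (N k) (pad (N' k) la) (pad (N k) mu))
           \<longlonglongrightarrow> YB_link r' r la mu"
proof -
  define a n where "a = size_yd mu" and "n = size_yd la - size_yd mu"
  have b: "size_yd la = a + n"
    using size_yd_mono[OF assms(5)] by (simp add: a_def n_def)
  note ratios = level_ratio_limits[OF assms(1,2,6-8)]
  have N': "filterlim N' at_top sequentially"
    by (rule filterlim_at_top_mono[OF assms(6)]) (simp add: less_imp_le[OF assms(7)])
  have large: "eventually (\<lambda>k. length la \<le> N k \<and> 0 < N k) sequentially"
    using assms(6)[unfolded filterlim_at_top, rule_format, of "max (length la) 1"]
    by (rule eventually_mono) simp
  have lengths: "eventually (\<lambda>k. length mu \<le> N k \<and> length la \<le> N' k) sequentially"
    using large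
  proof eventually_elim
    case (elim k)
    then show ?case
      using assms(5) less_imp_le[OF assms(7)] by (fastforce simp: yd_subset_def intro: le_trans)
  qed
  have positive: "eventually (\<lambda>k. 0 < real (N k) \<and> 0 < real (N' k) \<and> 0 < real (N' k - N k)) sequentially"
    using large by (rule eventually_mono) (metis assms(7) of_nat_0_less_iff zero_less_diff less_trans)
  have lim_mu: "(\<lambda>k. DimN (N k) (pad (N k) mu) / real (N k) ^ a) \<longlonglongrightarrow> real (dim_yd mu) / fact a"
    unfolding a_def by (rule DimN_asymptotics[OF assms(4,6)])
  have lim_la: "(\<lambda>k. DimN (N' k) (pad (N' k) la) / real (N' k) ^ (a + n))
      \<longlonglongrightarrow> real (dim_yd la) / fact (a + n)"
    unfolding b[symmetric] by (rule DimN_asymptotics[OF assms(3) N'])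
  have lim_skew: "(\<lambda>k. real (DimKN (N k) (N' k) (pad (N k) mu) (pad (N' k) la)) / real (N' k - N k) ^ n)
      \<longlonglongrightarrow> real (dim_skew la mu) / fact n"
    unfolding n_def by (rule DimKN_asymptotics[OF assms(3,4,5) ratios(3) lengths])
  have "(\<lambda>k. GT_link (N' k) (N k) (pad (N' k) la) (pad (N k) mu))
      \<longlonglongrightarrow> real (dim_yd mu) / fact a * (real (dim_skew la mu) / fact n) /
        (real (dim_yd la) / fact (a + n)) * ((r / r') ^ a * (1 - r / r') ^ n)"
    unfolding GT_link_def
    by (rule quotient_limit_rescaled[OF lim_mu lim_skew lim_la _ ratios(1,2)])
       (use dim_yd_pos[OF assms(3)] positive in auto)
  then show ?thesis
    by (simp add: YB_link_eq_limit[OF assms(1,2,3,5)] a_def n_def b[unfolded a_def n_def, symmetric])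
qed

end
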